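(* The leading eigenvalue $k$ of $\widehat\mu$ is twice differentiable at $0$, with gradient $\nabla k(0)=\mathbf{i}\,m$ and Hessian matrix $\mathbf{H}_k(0)=-\sigma$.
   Context: Fix integers $d,p\ge 1$. Let $(Z_n)=(A_n,M_n)$ be a Markov-additive process on $\mathbb{Z}^d\times\{1,\dots,p\}$ (a Markov chain with $\mathbb{P}_{(x,i)}((A_1,M_1)=(x',i'))=\mathbb{P}_{(0,i)}((A_1,M_1)=(x'-x,i'))$), with jump matrix $\mu_{i,j}(x)=\mathbb{P}_{(0,i)}((A_1,M_1)=(x,j))$, assumed irreducible, aperiodic (for every state, the gcd of possible return times is $1$), with finite exponential moments ($\sum_xe^{\alpha\|x\|}\mu_{i,j}(x)<\infty$ for all $\alpha>0$). Fourier transform $\widehat\mu(\theta)_{i,j}=\sum_xe^{\mathbf{i}x\cdot\theta}\mu_{i,j}(x)$, $\theta\in\mathbb{R}^d$. For $\theta$ in a neighborhood of $0$, $\widehat\mu(\theta)$ has a unique eigenvalue of maximal modulus, which is simple; it is denoted $k(\theta)$ (with $k(0)=1$). $\pi$ is the stationary distribution of $\widehat\mu(0)$ (the transition matrix of $(M_n)$); local drifts $m_{i,j}=\sum_xx\mu_{i,j}(x)$, global drift $m=\sum_{i,j}\pi_im_{i,j}$. A change of section is a real $p\times d$ matrix $g$ with rows $g_i$; ${}^g\mu_{i,j}(x)=\mu_{i,j}(x+g_j-g_i)$ for $x\in\mathbb{R}^d$, ${}^gm_{i,j}=\sum_xx\,{}^g\mu_{i,j}(x)$; $g$ is appropriate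 if $\sum_j{}^gm_{i,j}=m$ for all $i$ (such $g$ exist and give the same ${}^g\mu$). The energy matrix is $\sigma_{k,l}=\sum_{x\in\mathbb{R}^d}x_kx_l\sum_{i,j}\pi_i\,{}^g\mu_{i,j}(x)$ for $g$ appropriate. *)

theory Defs
  imports "HOL-Analysis.Analysis"
begin

text \<open>States of the modulating chain: a finite type 's (the set {1..p}).
  Positions: int ^ 'd (the lattice Z^d); ambient space real ^ 'd.
  Jump matrix: mu i j x = P_(0,i)((A_1,M_1) = (x,j)).\<close>

definition intvec :: "int ^ 'd \<Rightarrow> real ^ 'd" where
  "intvec z = (\<chi> k. of_int (z $ k))"

text \<open>n-step transition probabilities of the Markov-additive process Z,
  started at (0,i): Pn mu n i j x = P_(0,i)((A_n,M_n) = (x,j)).\<close>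
fun Pn :: "('s::finite \<Rightarrow> 's \<Rightarrow> int ^ 'd \<Rightarrow> real) \<Rightarrow> nat \<Rightarrow> 's \<Rightarrow> 's \<Rightarrow> int ^ 'd \<Rightarrow> real" where
  "Pn mu 0 i j x = (if i = j \<and> x = 0 then 1 else 0)"
| "Pn mu (Suc n) i j x = (\<Sum>l\<in>UNIV. infsum (\<lambda>y. Pn mu n i l y * mu l j (x - y)) UNIV)"

definition MA_kernel :: "('s::finite \<Rightarrow> 's \<Rightarrow> int ^ 'd \<Rightarrow> real) \<Rightarrow> bool" where
  "MA_kernel mu \<longleftrightarrow> (\<forall>i j x. 0 \<le> mu i j x) \<and>
     (\<forall>i j. mu i j summable_on UNIV) \<and>
     (\<forall>i. (\<Sum>j\<in>UNIV. infsum (mu i j) UNIV) = 1)"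

text \<open>Irreducibility of Z: every state (y,j) is reachable from every state (x,i);
  by translation invariance this means P_(0,i)(Z_n = (y - x, j)) > 0 for some n.\<close>
definition MA_irreducible :: "('s::finite \<Rightarrow> 's \<Rightarrow> int ^ 'd \<Rightarrow> real) \<Rightarrow> bool" where
  "MA_irreducible mu \<longleftrightarrow> (\<forall>i j x. \<exists>n. Pn mu n i j x > 0)"

text \<open>Aperiodicity: for every state (x,i) the gcd of possible return times is 1
  (by translation invariance, independent of x).\<close>
definition MA_aperiodic :: "('s::finite \<Rightarrow> 's \<Rightarrow> int ^ 'd \<Rightarrow> real) \<Rightarrow> bool" where
  "MA_aperiodic mu \<longleftrightarrow> (\<forall>i. Gcd {n. 0 < n \<and> Pn mu n i i 0 > 0} = (1::nat))"

definition exp_moments :: "('s::finite \<Rightarrow> 's \<Rightarrow> int ^ 'd \<Rightarrow> real) \<Rightarrow> bool" where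
  "exp_moments mu \<longleftrightarrow> (\<forall>\<alpha>>0. \<forall>i j. (\<lambda>x. exp (\<alpha> * norm (intvec x)) * mu i j x) summable_on UNIV)"

definition muhat :: "('s::finite \<Rightarrow> 's \<Rightarrow> int ^ 'd \<Rightarrow> real) \<Rightarrow> real ^ 'd \<Rightarrow> complex ^ 's ^ 's" where
  "muhat mu th = (\<chi> i j. infsum (\<lambda>x. cis (intvec x \<bullet> th) * complex_of_real (mu i j x)) UNIV)"

definition is_eigenvalue :: "complex ^ 's ^ 's \<Rightarrow> complex \<Rightarrow> bool" where
  "is_eigenvalue A l \<longleftrightarrow> (\<exists>v. v \<noteq> 0 \<and> A *v v = l *s v)"

definition leading_eigenvalue :: "complex ^ 's ^ 's \<Rightarrow> complex \<Rightarrow> bool" where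
  "leading_eigenvalue A l \<longleftrightarrow> is_eigenvalue A l \<and>
     (\<forall>l'. is_eigenvalue A l' \<and> l' \<noteq> l \<longrightarrow> cmod l' < cmod l)"

definition Mtrans :: "('s::finite \<Rightarrow> 's \<Rightarrow> int ^ 'd \<Rightarrow> real) \<Rightarrow> 's \<Rightarrow> 's \<Rightarrow> real" where
  "Mtrans mu i j = infsum (mu i j) UNIV"

definition stationary :: "('s::finite \<Rightarrow> 's \<Rightarrow> int ^ 'd \<Rightarrow> real) \<Rightarrow> ('s \<Rightarrow> real) \<Rightarrow> bool" where
  "stationary mu pr \<longleftrightarrow> (\<forall>i. 0 \<le> pr i) \<and> (\<Sum>i\<in>UNIV. pr i) = 1 \<and>
     (\<forall>j. (\<Sum>i\<in>UNIV. pr i * Mtrans mu i j) = pr j)"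

definition local_drift :: "('s::finite \<Rightarrow> 's \<Rightarrow> int ^ 'd \<Rightarrow> real) \<Rightarrow> 's \<Rightarrow> 's \<Rightarrow> real ^ 'd" where
  "local_drift mu i j = infsum (\<lambda>x. mu i j x *\<^sub>R intvec x) UNIV"

definition global_drift :: "('s::finite \<Rightarrow> 's \<Rightarrow> int ^ 'd \<Rightarrow> real) \<Rightarrow> ('s \<Rightarrow> real) \<Rightarrow> real ^ 'd" where
  "global_drift mu pr = (\<Sum>i\<in>UNIV. \<Sum>j\<in>UNIV. pr i *\<^sub>R local_drift mu i j)"

definition sec_mu :: "('s::finite \<Rightarrow> 's \<Rightarrow> int ^ 'd \<Rightarrow> real) \<Rightarrow> ('s \<Rightarrow> real ^ 'd) \<Rightarrow> 's \<Rightarrow> 's \<Rightarrow> real ^ 'd \<Rightarrow> real" where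
  "sec_mu mu g i j x = (if \<exists>z. intvec z = x + g j - g i
       then mu i j (THE z. intvec z = x + g j - g i) else 0)"

definition sec_drift :: "('s::finite \<Rightarrow> 's \<Rightarrow> int ^ 'd \<Rightarrow> real) \<Rightarrow> ('s \<Rightarrow> real ^ 'd) \<Rightarrow> 's \<Rightarrow> 's \<Rightarrow> real ^ 'd" where
  "sec_drift mu g i j = infsum (\<lambda>x. sec_mu mu g i j x *\<^sub>R x) UNIV"

definition appropriate :: "('s::finite \<Rightarrow> 's \<Rightarrow> int ^ 'd \<Rightarrow> real) \<Rightarrow> ('s \<Rightarrow> real) \<Rightarrow> ('s \<Rightarrow> real ^ 'd) \<Rightarrow> bool" where
  "appropriate mu pr g \<longleftrightarrow> (\<forall>i. (\<Sum>j\<in>UNIV. sec_drift mu g i j) = global_drift mu pr)"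

definition energy :: "('s::finite \<Rightarrow> 's \<Rightarrow> int ^ 'd \<Rightarrow> real) \<Rightarrow> ('s \<Rightarrow> real) \<Rightarrow> ('s \<Rightarrow> real ^ 'd) \<Rightarrow> 'd \<Rightarrow> 'd \<Rightarrow> real" where
  "energy mu pr g k l = infsum (\<lambda>x::real ^ 'd. x $ k * x $ l *
       (\<Sum>i\<in>UNIV. \<Sum>j\<in>UNIV. pr i * sec_mu mu g i j x)) UNIV"

end

theory Submission
  imports Defs "HOL-Probability.Characteristic_Functions"
begin

(* Conjugating muhat th by the diagonal matrix diag (cis (- g j . th)) gives the Fourier transform
   A th of the section-changed kernel ^g mu.  It has the same eigenvalues, so k th is also the
   leading eigenvalue of A th.  At 0, A 0 is the transition matrix P of the modulating chain, whose
   eigenvalue 1 is simple by irreducibility, with right eigenvector 1 and left eigenvector pi.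
   The implicit function theorem yields a C^1 branch (lam, v) of eigenpairs of A th normalised by
   pi . v = 1, and a compactness argument identifies lam with k near 0.  Differentiating the
   eigen-equation gives  grad lam th = pi . (A th - A 0) v' th + pi . A' th v th.  Appropriateness
   of g means that all row sums of A' 0 equal i m; hence v' 0 = 0 and grad lam 0 = i m, the first
   term has derivative 0 at 0, and the second one has derivative pi . A'' 0 1 = - sigma. *)

lemma has_sum_sum:
  fixes f :: "'i \<Rightarrow> 'a \<Rightarrow> 'b::topological_comm_monoid_add"
  assumes "finite I" "\<And>i. i \<in> I \<Longrightarrow> (f i has_sum s i) A"
  shows "((\<lambda>x. \<Sum>i\<in>I. f i x) has_sum (\<Sum>i\<in>I. s i)) A"
  using assms
proof (induction I rule: finite_induct)
  case (insert a F)
  then have "((\<lambda>x. f a x + (\<Sum>i\<in>F. f i x)) has_sum (s a + sum s F)) A"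
    by (intro has_sum_add) auto
  with insert.hyps show ?case by simp
qed simp

lemma has_sum_diff:
  fixes f g :: "'a \<Rightarrow> 'b::topological_ab_group_add"
  assumes "(f has_sum a) A" "(g has_sum b) A"
  shows "((\<lambda>x. f x - g x) has_sum (a - b)) A"
proof -
  have "((\<lambda>x. - g x) has_sum - b) A"
    using assms(2) by (simp add: has_sum_uminus)
  from has_sum_add[OF assms(1) this] show ?thesis by simp
qed

lemma summable_on_norm_le:
  fixes f :: "'a \<Rightarrow> 'b::banach"
  assumes "g summable_on A" "\<And>x. x \<in> A \<Longrightarrow> norm (f x) \<le> g x"
  shows "f summable_on A"
  by (rule abs_summable_summable, rule summable_on_comparison_test[OF assms(1)]) (use assms(2) in auto)

lemma has_derivative_vecI:
  fixes f :: "'a::euclidean_space \<Rightarrow> 'b::real_normed_vector ^ 'n"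
  assumes "\<And>i. ((\<lambda>x. f x $ i) has_derivative (\<lambda>h. f' h $ i)) (at x)"
  shows "(f has_derivative f') (at x)"
proof -
  have bl: "bounded_linear (\<lambda>h. f' h $ i)" for i
    using assms has_derivative_bounded_linear by blast
  have "linear f'"
    using linear_add[OF bounded_linear.linear[OF bl]] linear_scale[OF bounded_linear.linear[OF bl]]
    by (intro linearI) (simp_all add: vec_eq_iff)
  moreover have "((\<lambda>y. ((f y - f x) - f' (y - x)) /\<^sub>R norm (y - x)) \<longlongrightarrow> 0) (at x)"
  proof (rule vec_tendstoI)
    fix i
    show "((\<lambda>y. (((f y - f x) - f' (y - x)) /\<^sub>R norm (y - x)) $ i) \<longlongrightarrow> 0 $ i) (at x)"
      using assms[of i] unfolding has_derivative_at_within by simp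
  qed
  ultimately show ?thesis
    unfolding has_derivative_at_within by (simp add: linear_conv_bounded_linear)
qed

lemma sum_sum_sum_mult_swap:
  "(\<Sum>i\<in>A. \<Sum>j\<in>B. \<Sum>q\<in>C. h q * F i j q) = (\<Sum>q\<in>C. h q * (\<Sum>i\<in>A. \<Sum>j\<in>B. (F i j q :: 'a::comm_semiring_0)))"
proof -
  have "(\<Sum>i\<in>A. \<Sum>j\<in>B. \<Sum>q\<in>C. h q * F i j q) = (\<Sum>i\<in>A. \<Sum>q\<in>C. \<Sum>j\<in>B. h q * F i j q)"
    by (rule sum.cong[OF refl], rule sum.swap)
  also have "\<dots> = (\<Sum>q\<in>C. \<Sum>i\<in>A. \<Sum>j\<in>B. h q * F i j q)"
    by (rule sum.swap)
  finally show ?thesis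
    by (simp add: sum_distrib_left)
qed

lemma eventually_has_derivative_cong:
  assumes "\<forall>\<^sub>F x in nhds a. f x = g x" and "\<forall>\<^sub>F x in nhds a. (f has_derivative D x) (at x)"
  shows "\<forall>\<^sub>F x in nhds a. (g has_derivative D x) (at x)"
proof -
  obtain S where S: "open S" "a \<in> S" "\<And>x. x \<in> S \<Longrightarrow> f x = g x"
    using assms(1) unfolding eventually_nhds by blast
  from eventually_nhds_in_open[OF S(1,2)] assms(2)
  show ?thesis
    by eventually_elim (use S in \<open>auto intro: has_derivative_transform_within_open\<close>)
qed

lemma power_le_fact_mult_exp:
  fixes t :: real
  assumes "0 \<le> t"
  shows "t ^ n \<le> fact n * exp t"
proof -
  have s: "(\<lambda>k. t ^ k /\<^sub>R fact k) sums exp t" by (rule exp_converges)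
  have "t ^ n /\<^sub>R fact n \<le> (\<Sum>k<Suc n. t ^ k /\<^sub>R fact k)"
    by (rule member_le_sum) (use assms in auto)
  also have "\<dots> \<le> exp t"
    using sum_le_suminf[OF sums_summable[OF s], of "{..<Suc n}"] sums_unique[OF s] assms by simp
  finally show ?thesis by (simp add: field_simps)
qed

lemma norm_cis_sub_one_sub_linear_le: "cmod (cis t - 1 - \<i> * of_real t) \<le> t\<^sup>2 / 2"
  using iexp_approx1[of t 1] by (simp add: cis_conv_exp power2_eq_square diff_diff_eq)

lemma norm_cis_inner_sub_one_sub_linear_le:
  "cmod (cis (x \<bullet> h) - 1 - \<i> * of_real (x \<bullet> h)) \<le> (norm x * norm h)\<^sup>2 / 2"
proof -
  have "(x \<bullet> h)\<^sup>2 \<le> (norm x * norm h)\<^sup>2"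
    by (metis Cauchy_Schwarz_ineq2 abs_ge_zero power2_abs power_mono)
  with norm_cis_sub_one_sub_linear_le[of "x \<bullet> h"] show ?thesis by linarith
qed

section \<open>Fourier sums of summable families with moments\<close>

definition fourier_sum :: "('a \<Rightarrow> real ^ 'd) \<Rightarrow> ('a \<Rightarrow> complex) \<Rightarrow> real ^ 'd \<Rightarrow> complex" where
  "fourier_sum pos c th = infsum (\<lambda>x. cis (pos x \<bullet> th) * c x) UNIV"

definition has_moment :: "('a \<Rightarrow> real ^ 'd) \<Rightarrow> nat \<Rightarrow> ('a \<Rightarrow> complex) \<Rightarrow> bool" where
  "has_moment pos n c \<longleftrightarrow> (\<lambda>x. norm (pos x) ^ n * norm (c x)) summable_on UNIV"

definition icoord_mult :: "('a \<Rightarrow> real ^ 'd) \<Rightarrow> 'd \<Rightarrow> ('a \<Rightarrow> complex) \<Rightarrow> 'a \<Rightarrow> complex" where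
  "icoord_mult pos l c x = \<i> * of_real (pos x $ l) * c x"

lemma fourier_sum_has_sum:
  assumes "has_moment pos 0 c"
  shows "((\<lambda>x. cis (pos x \<bullet> th) * c x) has_sum fourier_sum pos c th) UNIV"
proof -
  have "(\<lambda>x. cis (pos x \<bullet> th) * c x) summable_on UNIV"
    by (rule summable_on_norm_le[of "\<lambda>x. norm (c x)"]) (use assms in \<open>auto simp: has_moment_def norm_mult\<close>)
  then show ?thesis unfolding fourier_sum_def by simp
qed

lemma fourier_sum_0: "fourier_sum pos c 0 = infsum c UNIV"
  by (simp add: fourier_sum_def)

lemma fourier_sum_translate:
  "fourier_sum (\<lambda>x. pos x - a) c th = cis (- (a \<bullet> th)) * fourier_sum pos c th"
proof -
  have "cis ((pos x - a) \<bullet> th) = cis (- (a \<bullet> th)) * cis (pos x \<bullet> th)" for x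
    by (simp add: inner_diff_left cis_mult)
  then show ?thesis
    unfolding fourier_sum_def by (simp add: mult.assoc infsum_cmult_right')
qed

lemma fourier_sum_icoord_mult_0:
  "fourier_sum pos (icoord_mult pos l c) 0 = \<i> * infsum (\<lambda>x. of_real (pos x $ l) * c x) UNIV"
proof -
  have "icoord_mult pos l c = (\<lambda>x. \<i> * (of_real (pos x $ l) * c x))"
    by (simp add: fun_eq_iff icoord_mult_def mult.assoc)
  then show ?thesis
    by (simp add: fourier_sum_0 infsum_cmult_right')
qed

lemma fourier_sum_icoord_mult2_0:
  "fourier_sum pos (icoord_mult pos q (icoord_mult pos l c)) 0
     = - infsum (\<lambda>x. of_real (pos x $ l * pos x $ q) * c x) UNIV"
proof -
  have "icoord_mult pos q (icoord_mult pos l c) = (\<lambda>x. - (of_real (pos x $ l * pos x $ q) * c x))"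
    by (simp add: fun_eq_iff icoord_mult_def algebra_simps)
  then show ?thesis
    by (simp only: fourier_sum_0 infsum_uminus)
qed

lemma has_moment_icoord_mult:
  assumes "has_moment pos (Suc n) c"
  shows "has_moment pos n (icoord_mult pos l c)"
  unfolding has_moment_def
proof (rule summable_on_comparison_test)
  show "(\<lambda>x. norm (pos x) ^ Suc n * norm (c x)) summable_on UNIV"
    using assms by (simp add: has_moment_def)
  fix x
  have "norm (icoord_mult pos l c x) \<le> norm (pos x) * norm (c x)"
    using component_le_norm_cart[of "pos x" l] by (simp add: icoord_mult_def norm_mult mult_right_mono)
  then have "norm (pos x) ^ n * norm (icoord_mult pos l c x) \<le> norm (pos x) ^ n * (norm (pos x) * norm (c x))"
    by (simp add: mult_left_mono)
  then show "norm (pos x) ^ n * norm (icoord_mult pos l c x) \<le> norm (pos x) ^ Suc n * norm (c x)"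
    by (simp add: mult_ac)
qed auto

lemma has_moment_if_exp_summable:
  assumes "(\<lambda>x. exp (norm (pos x)) * norm (c x)) summable_on UNIV"
  shows "has_moment pos n c"
  unfolding has_moment_def
proof (rule summable_on_comparison_test)
  show "(\<lambda>x. fact n * (exp (norm (pos x)) * norm (c x))) summable_on UNIV"
    using assms by (rule summable_on_cmult_right)
  show "norm (pos x) ^ n * norm (c x) \<le> fact n * (exp (norm (pos x)) * norm (c x))" for x
    using mult_right_mono[OF power_le_fact_mult_exp[OF norm_ge_zero], of "norm (c x)" "pos x" n]
    by (simp add: mult.assoc)
qed simp

lemma exp_summable_translate:
  assumes "(\<lambda>x. exp (norm (pos x)) * norm (c x)) summable_on UNIV"
  shows "(\<lambda>x. exp (norm (pos x - a)) * norm (c x)) summable_on UNIV"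
proof (rule summable_on_comparison_test)
  show "(\<lambda>x. exp (norm a) * (exp (norm (pos x)) * norm (c x))) summable_on UNIV"
    using assms by (rule summable_on_cmult_right)
  fix x
  have "exp (norm (pos x - a)) \<le> exp (norm a) * exp (norm (pos x))"
    using norm_triangle_ineq4[of "pos x" a] by (simp flip: exp_add)
  then show "exp (norm (pos x - a)) * norm (c x) \<le> exp (norm a) * (exp (norm (pos x)) * norm (c x))"
    by (simp add: mult.assoc[symmetric] mult_right_mono)
qed simp

lemma norm_fourier_sum_remainder_le:
  assumes m0: "has_moment pos 0 c" and m1: "has_moment pos 1 c" and m2: "has_moment pos 2 c"
  shows "norm (fourier_sum pos c (th + h) - fourier_sum pos c th
           - (\<Sum>l\<in>UNIV. of_real (h $ l) * fourier_sum pos (icoord_mult pos l c) th))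
         \<le> norm h ^ 2 / 2 * infsum (\<lambda>x. norm (pos x) ^ 2 * norm (c x)) UNIV"
proof -
  define r where "r x = cis (pos x \<bullet> th) * (cis (pos x \<bullet> h) - 1 - \<i> * of_real (pos x \<bullet> h)) * c x" for x
  have m0': "has_moment pos 0 (icoord_mult pos l c)" for l
    using has_moment_icoord_mult[of pos 0 c l] m1 by simp
  have "((\<lambda>x. cis (pos x \<bullet> (th + h)) * c x - cis (pos x \<bullet> th) * c x
        - (\<Sum>l\<in>UNIV. of_real (h $ l) * (cis (pos x \<bullet> th) * icoord_mult pos l c x)))
      has_sum (fourier_sum pos c (th + h) - fourier_sum pos c th
        - (\<Sum>l\<in>UNIV. of_real (h $ l) * fourier_sum pos (icoord_mult pos l c) th))) UNIV"
    by (intro has_sum_diff has_sum_sum has_sum_cmult_right fourier_sum_has_sum m0 m0') auto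
  moreover have "cis (pos x \<bullet> (th + h)) * c x - cis (pos x \<bullet> th) * c x
        - (\<Sum>l\<in>UNIV. of_real (h $ l) * (cis (pos x \<bullet> th) * icoord_mult pos l c x)) = r x" for x
  proof -
    have "(\<Sum>l\<in>UNIV. of_real (h $ l) * (cis (pos x \<bullet> th) * icoord_mult pos l c x))
        = cis (pos x \<bullet> th) * \<i> * of_real (pos x \<bullet> h) * c x"
      by (simp add: icoord_mult_def inner_vec_def sum_distrib_left sum_distrib_right algebra_simps)
    then show ?thesis
      by (simp add: r_def cis_mult inner_add_right algebra_simps flip: cis_mult)
  qed
  ultimately have hs: "(r has_sum (fourier_sum pos c (th + h) - fourier_sum pos c th
        - (\<Sum>l\<in>UNIV. of_real (h $ l) * fourier_sum pos (icoord_mult pos l c) th))) UNIV"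
    by simp
  have "norm (r x) \<le> norm h ^ 2 / 2 * (norm (pos x) ^ 2 * norm (c x))" for x
  proof -
    from norm_cis_inner_sub_one_sub_linear_le[of "pos x" h] have "cmod (cis (pos x \<bullet> h) - 1 - \<i> * of_real (pos x \<bullet> h)) * norm (c x)
        \<le> (norm (pos x) * norm h)\<^sup>2 / 2 * norm (c x)"
      by (rule mult_right_mono) simp
    then show ?thesis
      by (simp add: r_def norm_mult power_mult_distrib mult_ac)
  qed
  moreover have "((\<lambda>x. norm h ^ 2 / 2 * (norm (pos x) ^ 2 * norm (c x))) has_sum
      norm h ^ 2 / 2 * infsum (\<lambda>x. norm (pos x) ^ 2 * norm (c x)) UNIV) UNIV"
    using m2 by (intro has_sum_cmult_right) (simp add: has_moment_def)
  ultimately show ?thesis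
    by (intro norm_infsum_le[OF hs]) auto
qed

lemma fourier_sum_has_derivative:
  assumes m0: "has_moment pos 0 c" and m1: "has_moment pos 1 c" and m2: "has_moment pos 2 c"
  shows "(fourier_sum pos c has_derivative
           (\<lambda>h. \<Sum>l\<in>UNIV. of_real (h $ l) * fourier_sum pos (icoord_mult pos l c) th)) (at th)"
    (is "(_ has_derivative ?D) _")
proof -
  define M where "M = infsum (\<lambda>x. norm (pos x) ^ 2 * norm (c x)) UNIV"
  have "M \<ge> 0" unfolding M_def by (intro infsum_nonneg) auto
  have "bounded_linear ?D"
    by (intro bounded_linear_sum bounded_linear_mult_left[THEN bounded_linear_compose]
        bounded_linear_of_real[THEN bounded_linear_compose] bounded_linear_vec_nth)
  moreover have "\<exists>d>0. \<forall>y. norm (y - th) < d \<longrightarrow>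
      norm (fourier_sum pos c y - fourier_sum pos c th - ?D (y - th)) \<le> e * norm (y - th)"
    if "e > 0" for e
  proof (intro exI[of _ "2 * e / (M + 1)"] conjI allI impI)
    show "0 < 2 * e / (M + 1)" using \<open>e > 0\<close> \<open>M \<ge> 0\<close> by simp
    fix y assume "norm (y - th) < 2 * e / (M + 1)"
    then have "norm (y - th) * (M + 1) < 2 * e"
      using \<open>M \<ge> 0\<close> by (simp add: pos_less_divide_eq)
    moreover have "norm (y - th) * M \<le> norm (y - th) * (M + 1)"
      by (simp add: mult_left_mono)
    ultimately have "norm (y - th) * M \<le> 2 * e" by linarith
    then have "norm (y - th) ^ 2 / 2 * M \<le> e * norm (y - th)"
      using mult_left_mono[of "norm (y - th) * M" "2 * e" "norm (y - th)"]
      by (simp add: power2_eq_square algebra_simps)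
    with norm_fourier_sum_remainder_le[OF m0 m1 m2, of th "y - th"]
    show "norm (fourier_sum pos c y - fourier_sum pos c th - ?D (y - th)) \<le> e * norm (y - th)"
      by (simp add: M_def)
  qed
  ultimately show ?thesis
    unfolding has_derivative_at_alt by blast
qed

definition fourier_matrix ::
    "('s \<Rightarrow> 's \<Rightarrow> 'a \<Rightarrow> real ^ 'd) \<Rightarrow> ('s \<Rightarrow> 's \<Rightarrow> 'a \<Rightarrow> complex) \<Rightarrow> real ^ 'd \<Rightarrow> complex ^ 's ^ 's" where
  "fourier_matrix pos c th = (\<chi> i j. fourier_sum (pos i j) (c i j) th)"

definition fourier_matrix_deriv ::
    "('s \<Rightarrow> 's \<Rightarrow> 'a \<Rightarrow> real ^ 'd) \<Rightarrow> ('s \<Rightarrow> 's \<Rightarrow> 'a \<Rightarrow> complex) \<Rightarrow> real ^ 'd \<Rightarrow> real ^ 'd \<Rightarrow> complex ^ 's ^ 's" where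
  "fourier_matrix_deriv pos c th h =
     (\<chi> i j. \<Sum>l\<in>UNIV. of_real (h $ l) * fourier_sum (pos i j) (icoord_mult (pos i j) l (c i j)) th)"

lemma fourier_matrix_has_derivative:
  assumes "\<And>i j n. has_moment (pos i j) n (c i j)"
  shows "(fourier_matrix pos c has_derivative fourier_matrix_deriv pos c th) (at th)"
  unfolding fourier_matrix_def fourier_matrix_deriv_def
  by (intro has_derivative_vecI) (simp add: fourier_sum_has_derivative assms)

lemma fourier_matrix_deriv_axis:
  "fourier_matrix_deriv pos c th (axis l 1) = fourier_matrix pos (\<lambda>i j. icoord_mult (pos i j) l (c i j)) th"
proof -
  have "(\<Sum>q\<in>UNIV. of_real (axis l 1 $ q) * F q) = (F l :: complex)" for F
    by (simp add: axis_def if_distrib[of of_real] if_distrib[of "\<lambda>x. x * _"] cong: if_cong)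
  then show ?thesis
    by (simp add: fourier_matrix_deriv_def fourier_matrix_def)
qed

lemma continuous_on_fourier_matrix_deriv:
  assumes "\<And>i j n. has_moment (pos i j) n (c i j)"
  shows "continuous_on UNIV (\<lambda>th. fourier_matrix_deriv pos c th h)"
proof -
  have "continuous_on UNIV (fourier_sum (pos i j) (icoord_mult (pos i j) l (c i j)))" for i j l
    using fourier_sum_has_derivative[OF has_moment_icoord_mult has_moment_icoord_mult has_moment_icoord_mult]
      assms by (meson has_derivative_continuous continuous_at_imp_continuous_on)
  then show ?thesis
    unfolding fourier_matrix_deriv_def by (intro continuous_on_vec_lambda continuous_intros)
qed

section \<open>Perturbation of a simple eigenvalue\<close>

lemma bounded_bilinear_matrix_vector_mult:
  "bounded_bilinear (\<lambda>(A::complex^'n^'m) (v::complex^'n). A *v v)"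
proof -
  have "bilinear (\<lambda>(A::complex^'n^'m) (v::complex^'n). A *v v)"
    unfolding bilinear_def
    by (auto intro!: linearI simp: matrix_vector_mult_def vec_eq_iff sum.distrib sum_distrib_left
        algebra_simps vector_scaleR_component scaleR_conv_of_real[where 'a = complex])
  then show ?thesis by (simp add: bilinear_conv_bounded_bilinear)
qed

lemma bounded_bilinear_vector_scalar_mult: "bounded_bilinear (\<lambda>(c::complex) (v::complex^'n). c *s v)"
proof -
  have "bilinear (\<lambda>(c::complex) (v::complex^'n). c *s v)"
    unfolding bilinear_def
    by (auto intro!: linearI simp: vec_eq_iff algebra_simps vector_scaleR_component scaleR_conv_of_real[where 'a = complex])
  then show ?thesis by (simp add: bilinear_conv_bounded_bilinear)
qed

lemma matrix_vector_mult_smult: "(A::'a::comm_ring_1^'n^'m) *v (c *s v) = c *s (A *v v)"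
  by (simp add: vec_eq_iff matrix_vector_mult_def sum_distrib_left algebra_simps)

text \<open>Bilinear, not Hermitian: \<open>p\<close> plays the role of a left eigenvector.\<close>
definition vdot :: "complex ^ 'n \<Rightarrow> complex ^ 'n \<Rightarrow> complex" where
  "vdot p v = (\<Sum>i\<in>UNIV. p $ i * v $ i)"

lemma bounded_linear_vdot: "bounded_linear (vdot p)"
  unfolding vdot_def
  by (intro bounded_linear_sum bounded_linear_mult_right[THEN bounded_linear_compose] bounded_linear_vec_nth)

lemma vdot_simps:
  "vdot p (v + w) = vdot p v + vdot p w" "vdot p (v - w) = vdot p v - vdot p w"
  "vdot p (c *s v) = c * vdot p v" "vdot p 0 = 0"
  by (auto simp: vdot_def sum.distrib sum_subtractf sum_distrib_left algebra_simps)

lemma has_derivative_eq_on_open: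
  assumes "open S" "x \<in> S" "\<And>y. y \<in> S \<Longrightarrow> f y = g y"
    and "(f has_derivative F) (at x)" "(g has_derivative G) (at x)"
  shows "F = G"
proof -
  have "(g has_derivative F) (at x)"
    using has_derivative_transform_within_open[OF assms(4) assms(1,2)] assms(3) by blast
  then show ?thesis using assms(5) by (rule has_derivative_unique)
qed

lemma has_derivative_bilinear_vanishing:
  fixes a :: "'a::real_normed_vector \<Rightarrow> 'b::real_normed_vector" and b :: "'a \<Rightarrow> 'c::real_normed_vector"
    and bil :: "'b \<Rightarrow> 'c \<Rightarrow> 'e::real_normed_vector"
  assumes "bounded_bilinear bil" and a: "(a has_derivative a') (at x)" "a x = 0" and "isCont b x"
  shows "((\<lambda>y. bil (a y) (b y)) has_derivative (\<lambda>h. bil (a' h) (b x))) (at x)"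
proof -
  interpret bil: bounded_bilinear bil by fact
  obtain B where B: "B > 0" "\<And>h. norm (a' h) \<le> norm h * B"
    using bounded_linear.pos_bounded[OF has_derivative_bounded_linear[OF a(1)]] by blast
  obtain K where K: "K > 0" "\<And>u v. norm (bil u v) \<le> norm u * norm v * K"
    using bil.pos_bounded by blast
  obtain d1 where d1: "d1 > 0" "\<And>y. norm (y - x) < d1 \<Longrightarrow> norm (a y - a x - a' (y - x)) \<le> 1 * norm (y - x)"
    using a(1) unfolding has_derivative_at_alt by (meson zero_less_one)
  have a_lipschitz: "norm (a y) \<le> (1 + B) * norm (y - x)" if "norm (y - x) < d1" for y
  proof -
    have "norm (a y) \<le> norm (a y - a x - a' (y - x)) + norm (a' (y - x))"
      using norm_triangle_ineq[of "a y - a x - a' (y - x)" "a' (y - x)"] a(2) by simp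
    also have "\<dots> \<le> norm (y - x) + norm (y - x) * B" using d1(2)[OF that] B(2)[of "y - x"] by simp
    finally show ?thesis by (simp add: algebra_simps)
  qed
  have "((\<lambda>y. bil (a y) (b y - b x)) has_derivative (\<lambda>h. 0)) (at x)"
    unfolding has_derivative_at_alt
  proof (intro conjI allI impI bounded_linear_zero)
    fix e :: real assume "e > 0"
    then obtain d2 where d2: "d2 > 0" "\<And>y. dist y x < d2 \<Longrightarrow> dist (b y) (b x) < e / ((1 + B) * K)"
      using \<open>isCont b x\<close> B K unfolding continuous_at_eps_delta by (metis divide_pos_pos mult_pos_pos add_pos_pos zero_less_one)
    show "\<exists>d>0. \<forall>y. norm (y - x) < d \<longrightarrow> norm (bil (a y) (b y - b x) - bil (a x) (b x - b x) - 0) \<le> e * norm (y - x)"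
    proof (intro exI[of _ "min d1 d2"] conjI allI impI)
      show "min d1 d2 > 0" using d1 d2 by simp
      fix y assume y: "norm (y - x) < min d1 d2"
      have "norm (bil (a y) (b y - b x)) \<le> norm (a y) * norm (b y - b x) * K" by (rule K(2))
      also have "\<dots> \<le> ((1 + B) * norm (y - x)) * (e / ((1 + B) * K)) * K"
        using a_lipschitz[of y] d2(2)[of y] y K B by (intro mult_right_mono mult_mono) (auto simp: dist_norm)
      also have "\<dots> = e * norm (y - x)"
        using B K by (simp add: field_simps add_pos_pos[THEN less_imp_neq, THEN not_sym])
      finally show "norm (bil (a y) (b y - b x) - bil (a x) (b x - b x) - 0) \<le> e * norm (y - x)"
        using a(2) by (simp add: bil.zero_left)
    qed
  qed
  from has_derivative_add[OF bil.FDERIV[OF a(1) has_derivative_const[of "b x"]] this]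
  show ?thesis by (simp add: bil.diff_right bil.zero_right a(2))
qed

lemma isCont_inv_blinfun_apply:
  fixes L :: "'a::metric_space \<Rightarrow> 'b::euclidean_space \<Rightarrow>\<^sub>L 'b"
  assumes "isCont L y0" and bij: "eventually (\<lambda>y. bij (blinfun_apply (L y))) (nhds y0)"
  shows "isCont (\<lambda>y. inv (blinfun_apply (L y)) z) y0"
proof -
  define L0 where "L0 = L y0"
  define x where "x y = inv (blinfun_apply (L y)) z" for y
  have bij0: "bij (blinfun_apply L0)" using eventually_nhds_x_imp_x[OF bij] by (simp add: L0_def)
  obtain B where B: "B > 0" "\<And>x. B * norm x \<le> norm (blinfun_apply L0 x)"
    using linear_inj_bounded_below_pos[of "blinfun_apply L0"] bij0 bij_is_inj
      bounded_linear.linear[OF blinfun.bounded_linear_right] by blast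
  have Lx: "blinfun_apply (L y) (x y) = z" if "bij (blinfun_apply (L y))" for y
    using that unfolding x_def by (meson bij_inv_eq_iff)
  have x0: "blinfun_apply L0 (x y0) = z" using Lx[of y0] bij0 by (simp add: L0_def)
  have tL: "(L \<longlongrightarrow> L0) (at y0)" using \<open>isCont L y0\<close> by (simp add: isCont_def L0_def)
  have "eventually (\<lambda>y. norm (L y - L0) < B / 2) (at y0)"
    using tendstoD[OF tL, of "B/2"] B(1) by (simp add: dist_norm)
  moreover have "eventually (\<lambda>y. bij (blinfun_apply (L y))) (at y0)"
    using bij by (simp add: eventually_at_filter eventually_mono)
  ultimately have "eventually (\<lambda>y. norm (x y - x y0) \<le> (2 * norm z / B\<^sup>2) * norm (L y - L0)) (at y0)"
  proof eventually_elim
    case (elim y)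
    have d: "blinfun_apply L0 (x y) - z = blinfun_apply (L0 - L y) (x y)"
      using Lx elim(2) by (simp add: blinfun.diff_left)
    have n1: "norm (blinfun_apply (L0 - L y) (x y)) \<le> norm (L y - L0) * norm (x y)"
      using norm_blinfun[of "L0 - L y" "x y"] by (simp add: norm_minus_commute)
    have "B * norm (x y) \<le> norm z + norm (blinfun_apply L0 (x y) - z)"
      using B(2)[of "x y"] by (metis norm_triangle_sub add.commute order_trans)
    also have "\<dots> \<le> norm z + B / 2 * norm (x y)"
      using d n1 elim(1) by (smt (verit) mult_right_mono norm_ge_zero)
    finally have bx: "norm (x y) \<le> 2 * norm z / B" using B(1) by (simp add: field_simps)
    have "B * norm (x y - x y0) \<le> norm (blinfun_apply L0 (x y - x y0))" by (rule B(2))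
    also have "blinfun_apply L0 (x y - x y0) = blinfun_apply (L0 - L y) (x y)"
      using d x0 by (simp add: blinfun.diff_right)
    also have "norm \<dots> \<le> norm (L y - L0) * (2 * norm z / B)"
      using n1 bx by (meson mult_left_mono norm_ge_zero order_trans)
    finally show ?case using B(1) by (simp add: field_simps power2_eq_square)
  qed
  moreover have "((\<lambda>y. (2 * norm z / B\<^sup>2) * norm (L y - L0)) \<longlongrightarrow> 0) (at y0)"
    using tL by (intro tendsto_mult_right_zero) (simp add: tendsto_norm_zero_iff LIM_zero)
  ultimately have "((\<lambda>y. x y - x y0) \<longlongrightarrow> 0) (at y0)" by (rule Lim_null_comparison)
  then show ?thesis unfolding isCont_def x_def[symmetric] by (rule LIM_zero_cancel)
qed

lemma eigenpair_convergent_subseq: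
  fixes B :: "nat \<Rightarrow> complex ^ 'n ^ 'n"
  assumes "B \<longlonglongrightarrow> B0" "\<And>n. B n *v u n = l n *s u n" "\<And>n. norm (u n) = 1" "\<And>n. cmod (l n) \<le> 1"
  obtains r l0 u0 where "strict_mono r" "(\<lambda>n. l (r n)) \<longlonglongrightarrow> l0" "(\<lambda>n. u (r n)) \<longlonglongrightarrow> u0"
    "norm u0 = 1" "B0 *v u0 = l0 *s u0"
proof -
  have "compact (cball (0::complex) 1 \<times> sphere (0::complex ^ 'n) 1)"
    by (intro compact_Times compact_cball compact_sphere)
  moreover have "\<forall>n. (l n, u n) \<in> cball 0 1 \<times> sphere 0 1"
    using assms(3,4) by simp
  ultimately obtain lu0 r where lu0: "lu0 \<in> cball 0 1 \<times> sphere 0 1" and "strict_mono r"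
    and "((\<lambda>n. (l n, u n)) \<circ> r) \<longlonglongrightarrow> lu0"
    by (rule seq_compactE[OF compact_imp_seq_compact])
  moreover obtain l0 u0 where "lu0 = (l0, u0)" by (cases lu0)
  ultimately have lim: "((\<lambda>n. (l n, u n)) \<circ> r) \<longlonglongrightarrow> (l0, u0)" and "norm u0 = 1"
    using lu0 by auto
  have l: "(\<lambda>n. l (r n)) \<longlonglongrightarrow> l0" and u: "(\<lambda>n. u (r n)) \<longlonglongrightarrow> u0"
    using tendsto_fst[OF lim] tendsto_snd[OF lim] by (simp_all add: o_def)
  have "(\<lambda>n. B (r n) *v u (r n)) \<longlonglongrightarrow> B0 *v u0"
    using bounded_bilinear.tendsto[OF bounded_bilinear_matrix_vector_mult
        LIMSEQ_subseq_LIMSEQ[OF assms(1) \<open>strict_mono r\<close>, unfolded o_def] u] by simp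
  then have "(\<lambda>n. l (r n) *s u (r n)) \<longlonglongrightarrow> B0 *v u0"
    by (simp add: assms(2))
  moreover have "(\<lambda>n. l (r n) *s u (r n)) \<longlonglongrightarrow> l0 *s u0"
    using bounded_bilinear.tendsto[OF bounded_bilinear_vector_scalar_mult l u] by simp
  ultimately have "B0 *v u0 = l0 *s u0"
    by (rule LIMSEQ_unique)
  with that \<open>strict_mono r\<close> l u \<open>norm u0 = 1\<close> show ?thesis by blast
qed

lemma is_eigenvalue_norm_le_row_sum:
  assumes "is_eigenvalue B l" and row: "\<And>i. (\<Sum>j\<in>UNIV. cmod (B $ i $ j)) \<le> c"
  shows "cmod l \<le> c"
proof -
  obtain v where v: "v \<noteq> 0" "B *v v = l *s v"
    using assms(1) unfolding is_eigenvalue_def by blast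
  have "Max (range (\<lambda>j. cmod (v $ j))) \<in> range (\<lambda>j. cmod (v $ j))"
    by (rule Max_in) simp_all
  then obtain i where i: "Max (range (\<lambda>j. cmod (v $ j))) = cmod (v $ i)"
    by (rule rangeE)
  have le: "cmod (v $ j) \<le> cmod (v $ i)" for j
    unfolding i[symmetric] by (rule Max_ge) simp_all
  have "cmod (v $ i) > 0"
  proof (rule ccontr)
    assume "\<not> cmod (v $ i) > 0"
    then have "v $ j = 0" for j using le[of j] by simp
    with v(1) show False by (simp add: vec_eq_iff)
  qed
  have "(\<Sum>j\<in>UNIV. B $ i $ j * v $ j) = l * v $ i"
    using arg_cong[OF v(2), of "\<lambda>x. x $ i"] by (simp add: matrix_vector_mult_def)
  then have "cmod l * cmod (v $ i) = cmod (\<Sum>j\<in>UNIV. B $ i $ j * v $ j)"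
    by (simp add: norm_mult)
  also have "\<dots> \<le> (\<Sum>j\<in>UNIV. cmod (B $ i $ j) * cmod (v $ i))"
    using le by (intro order_trans[OF norm_sum] sum_mono) (simp add: norm_mult mult_left_mono)
  also have "\<dots> \<le> c * cmod (v $ i)"
    using row[of i] by (simp add: mult_right_mono flip: sum_distrib_right)
  finally show ?thesis using \<open>cmod (v $ i) > 0\<close> by simp
qed

lemma is_eigenvalue_diagonal_similar_imp:
  fixes A B :: "complex ^ 'n ^ 'n"
  assumes "is_eigenvalue B l" and u: "\<And>i. u i \<noteq> 0" and B: "\<And>i j. B $ i $ j = A $ i $ j * u j / u i"
  shows "is_eigenvalue A l"
proof -
  obtain v where v: "v \<noteq> 0" "B *v v = l *s v"
    using assms(1) unfolding is_eigenvalue_def by blast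
  define w where "w = (\<chi> j. u j * v $ j)"
  have "w \<noteq> 0" using v(1) u by (auto simp: w_def vec_eq_iff)
  moreover have "(A *v w) $ i = (l *s w) $ i" for i
  proof -
    have "(A *v w) $ i = u i * (B *v v) $ i"
      using u by (simp add: w_def B matrix_vector_mult_def sum_distrib_left field_simps)
    then show ?thesis using v(2) by (simp add: w_def)
  qed
  ultimately show ?thesis
    unfolding is_eigenvalue_def by (auto simp: vec_eq_iff)
qed

lemma is_eigenvalue_diagonal_similar:
  fixes A B :: "complex ^ 'n ^ 'n"
  assumes u: "\<And>i. u i \<noteq> 0" and B: "\<And>i j. B $ i $ j = A $ i $ j * u j / u i"
  shows "is_eigenvalue B l \<longleftrightarrow> is_eigenvalue A l"
proof
  show "is_eigenvalue A l" if "is_eigenvalue B l"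
    using that u B by (rule is_eigenvalue_diagonal_similar_imp)
  show "is_eigenvalue B l" if "is_eigenvalue A l"
    using that by (rule is_eigenvalue_diagonal_similar_imp[where u = "\<lambda>i. 1 / u i"]) (simp_all add: u B)
qed

lemma leading_eigenvalue_diagonal_similar:
  fixes A B :: "complex ^ 'n ^ 'n"
  assumes "\<And>i. u i \<noteq> 0" and "\<And>i j. B $ i $ j = A $ i $ j * u j / u i"
  shows "leading_eigenvalue B l \<longleftrightarrow> leading_eigenvalue A l"
  unfolding leading_eigenvalue_def using is_eigenvalue_diagonal_similar[OF assms] by simp

type_synonym ('d, 's) eigen_triple = "(real ^ 'd) \<times> complex \<times> (complex ^ 's)"

locale simple_eigen_perturbation =
  fixes A :: "real ^ 'd \<Rightarrow> complex ^ 's ^ 's" and DA :: "real ^ 'd \<Rightarrow> real ^ 'd \<Rightarrow> complex ^ 's ^ 's"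
    and p e :: "complex ^ 's"
  assumes A_has_derivative: "\<And>th. (A has_derivative DA th) (at th)"
    and continuous_on_DA: "\<And>h. continuous_on UNIV (\<lambda>th. DA th h)"
    and vdot_left_eigen: "\<And>w. vdot p (A 0 *v w) = vdot p w"
    and right_eigen: "A 0 *v e = e"
    and eigenspace_1: "\<And>w. A 0 *v w = w \<Longrightarrow> \<exists>c. w = c *s e"
    and vdot_p_e: "vdot p e = 1"
begin

text \<open>Eigenpairs \<open>(l, v)\<close> of \<open>A th\<close> with \<open>vdot p v = 1\<close> are the zeros of the last two components.\<close>
definition eigen_map :: "('d, 's) eigen_triple \<Rightarrow> ('d, 's) eigen_triple" where
  "eigen_map = (\<lambda>(th, l, v). (th, vdot p v - 1, A th *v v - l *s v))"

definition eigen_map_deriv ::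
    "('d, 's) eigen_triple \<Rightarrow> ('d, 's) eigen_triple \<Rightarrow> ('d, 's) eigen_triple" where
  "eigen_map_deriv = (\<lambda>(th, l, v) (h, m, w). (h, vdot p w, A th *v w + DA th h *v v - (l *s w + m *s v)))"

lemma eigen_map_has_derivative: "(eigen_map has_derivative eigen_map_deriv x) (at x)"
proof -
  have "eigen_map = (\<lambda>y. (fst y, vdot p (snd (snd y)) - 1, A (fst y) *v snd (snd y) - fst (snd y) *s snd (snd y)))"
    by (auto simp: eigen_map_def)
  moreover have "eigen_map_deriv x = (\<lambda>y. (fst y, vdot p (snd (snd y)) - 0,
      A (fst x) *v snd (snd y) + DA (fst x) (fst y) *v snd (snd x)
        - (fst (snd x) *s snd (snd y) + fst (snd y) *s snd (snd x))))"
    by (auto simp: eigen_map_deriv_def split: prod.splits)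
  moreover have "((\<lambda>y. A (fst y)) has_derivative (\<lambda>y. DA (fst x) (fst y))) (at x)"
    by (rule has_derivative_compose[OF has_derivative_fst[OF has_derivative_ident] A_has_derivative])
  ultimately show ?thesis
    by (simp only:) (intro has_derivative_Pair has_derivative_diff has_derivative_add
        bounded_bilinear.FDERIV[OF bounded_bilinear_matrix_vector_mult]
        bounded_bilinear.FDERIV[OF bounded_bilinear_vector_scalar_mult]
        bounded_linear.has_derivative[OF bounded_linear_vdot] has_derivative_fst has_derivative_snd
        has_derivative_ident has_derivative_const)
qed

lemma bounded_linear_eigen_map_deriv: "bounded_linear (eigen_map_deriv x)"
  using eigen_map_has_derivative by (rule has_derivative_bounded_linear)

lemma continuous_on_eigen_map_deriv: "continuous_on UNIV (\<lambda>x. Blinfun (eigen_map_deriv x))"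
proof (rule continuous_on_blinfun_componentwise)
  fix y :: "('d, 's) eigen_triple"
  obtain h m w where y: "y = (h, m, w)" by (cases y)
  have "continuous_on UNIV A"
    using A_has_derivative by (meson has_derivative_continuous continuous_at_imp_continuous_on)
  then have "continuous_on UNIV (\<lambda>x::('d, 's) eigen_triple. A (fst x))"
    and "continuous_on UNIV (\<lambda>x::('d, 's) eigen_triple. DA (fst x) h)"
    by (auto intro!: continuous_on_compose2[OF _ continuous_on_fst] continuous_on_DA continuous_on_id)
  then have "continuous_on UNIV (\<lambda>x. eigen_map_deriv x y)"
    unfolding y eigen_map_deriv_def
    by (simp add: case_prod_beta, intro continuous_intros
        bounded_bilinear.continuous_on[OF bounded_bilinear_matrix_vector_mult]
        bounded_bilinear.continuous_on[OF bounded_bilinear_vector_scalar_mult])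
  then show "continuous_on UNIV (\<lambda>x. blinfun_apply (Blinfun (eigen_map_deriv x)) y)"
    by (simp add: bounded_linear_Blinfun_apply[OF bounded_linear_eigen_map_deriv])
qed

text \<open>Simplicity of the eigenvalue \<open>1\<close> of \<open>A 0\<close> makes the linearisation at \<open>(0, 1, e)\<close> invertible.\<close>
lemma inj_eigen_map_deriv: "inj (eigen_map_deriv (0, 1, e))"
proof -
  have "z = 0" if "eigen_map_deriv (0, 1, e) z = 0" for z
  proof -
    obtain h m w where z: "z = (h, m, w)" by (cases z)
    have DA0: "DA 0 0 = 0"
      using has_derivative_bounded_linear[OF A_has_derivative] linear_0 bounded_linear.linear by blast
    from that have "h = 0" "vdot p w = 0" and eq: "A 0 *v w - w = m *s e"
      by (auto simp: eigen_map_deriv_def z zero_prod_def DA0 algebra_simps)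
    moreover from eq have "m = 0"
      using vdot_left_eigen \<open>vdot p w = 0\<close> vdot_p_e by (metis vdot_simps(2,3) mult_1_right diff_self)
    moreover obtain c where "w = c *s e"
      using eq \<open>m = 0\<close> eigenspace_1 by (metis eq_iff_diff_eq_0 vector_smult_lzero)
    ultimately show ?thesis
      using vdot_p_e by (simp add: z zero_prod_def vdot_simps)
  qed
  then show ?thesis
    using bounded_linear_eigen_map_deriv by (metis bounded_linear.linear linear_inj_iff_eq_0 diff_zero)
qed

lemma eigen_map_eq_slice_iff:
  "eigen_map (th, l, v) = (th', 0, 0) \<longleftrightarrow> th' = th \<and> A th *v v = l *s v \<and> vdot p v = 1"
  by (auto simp: eigen_map_def)

lemma leading_eigenvalue_0:
  assumes "leading_eigenvalue (A 0) l" and "\<And>l'. is_eigenvalue (A 0) l' \<Longrightarrow> cmod l' \<le> 1"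
  shows "l = 1"
proof (rule ccontr)
  assume "l \<noteq> 1"
  have "e \<noteq> 0" using vdot_p_e by (auto simp: vdot_simps)
  then have "is_eigenvalue (A 0) 1"
    unfolding is_eigenvalue_def using right_eigen by (intro exI[of _ e]) simp
  then have "1 < cmod l"
    using assms(1) \<open>l \<noteq> 1\<close> unfolding leading_eigenvalue_def by auto
  moreover have "cmod l \<le> 1"
    using assms unfolding leading_eigenvalue_def by blast
  ultimately show False by simp
qed

end

locale eigen_branch = simple_eigen_perturbation A DA p e
  for A :: "real ^ 'd \<Rightarrow> complex ^ 's ^ 's" and DA p e +
  fixes N :: "(real ^ 'd) set" and W :: "('d, 's) eigen_triple set"
    and lam :: "real ^ 'd \<Rightarrow> complex" and vv :: "real ^ 'd \<Rightarrow> complex ^ 's"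
    and lam' :: "real ^ 'd \<Rightarrow> real ^ 'd \<Rightarrow> complex" and vv' :: "real ^ 'd \<Rightarrow> real ^ 'd \<Rightarrow> complex ^ 's"
  assumes open_N: "open N" and zero_in_N: "0 \<in> N"
    and eigen_eq: "\<And>th. th \<in> N \<Longrightarrow> A th *v vv th = lam th *s vv th"
    and vdot_vv: "\<And>th. th \<in> N \<Longrightarrow> vdot p (vv th) = 1"
    and lam_has_derivative: "\<And>th. th \<in> N \<Longrightarrow> (lam has_derivative lam' th) (at th)"
    and vv_has_derivative: "\<And>th. th \<in> N \<Longrightarrow> (vv has_derivative vv' th) (at th)"
    and lam_0: "lam 0 = 1" and vv_0: "vv 0 = e"
    and isCont_vv': "\<And>h. isCont (\<lambda>th. vv' th h) 0"
    and open_W: "open W" and in_W: "(0, 1, e) \<in> W"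
    and unique_in_W: "\<And>th l v. (th, l, v) \<in> W \<Longrightarrow> A th *v v = l *s v \<Longrightarrow> vdot p v = 1 \<Longrightarrow> l = lam th"

context simple_eigen_perturbation
begin

lemma eigen_map_local_inverse:
  obtains U V gi where "open U" "(0, 1, e) \<in> U" "open V" "(0, 0, 0) \<in> V" "homeomorphism U V eigen_map gi"
    "\<And>y. y \<in> V \<Longrightarrow> (gi has_derivative inv (eigen_map_deriv (gi y))) (at y)"
    "\<And>y. y \<in> V \<Longrightarrow> bij (eigen_map_deriv (gi y))"
proof -
  define x0 :: "('d, 's) eigen_triple" where "x0 = (0, 1, e)"
  have "eigen_map x0 = (0, 0, 0)"
    using vdot_p_e right_eigen by (simp add: x0_def eigen_map_def)
  obtain gl where gl: "linear gl" "gl \<circ> eigen_map_deriv x0 = id"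
    using linear_injective_left_inverse[OF bounded_linear.linear[OF bounded_linear_eigen_map_deriv]
      inj_eigen_map_deriv] by (auto simp: x0_def)
  have invf: "Blinfun gl o\<^sub>L Blinfun (eigen_map_deriv x0) = id_blinfun"
    using gl by (intro blinfun_eqI)
      (simp add: bounded_linear_Blinfun_apply bounded_linear_eigen_map_deriv linear_conv_bounded_linear
        pointfree_idE)
  obtain U V gi gi' where ift: "open U" "x0 \<in> U" "open V" "eigen_map x0 \<in> V" "homeomorphism U V eigen_map gi"
    "\<And>y. y \<in> V \<Longrightarrow> (gi has_derivative gi' y) (at y)"
    "\<And>y. y \<in> V \<Longrightarrow> gi' y = inv (eigen_map_deriv (gi y))"
    "\<And>y. y \<in> V \<Longrightarrow> bij (eigen_map_deriv (gi y))"
  proof (rule inverse_function_theorem[of UNIV eigen_map "\<lambda>x. Blinfun (eigen_map_deriv x)" x0 "Blinfun gl"])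
    show "(eigen_map has_derivative blinfun_apply (Blinfun (eigen_map_deriv x))) (at x)" for x
      by (simp add: bounded_linear_Blinfun_apply[OF bounded_linear_eigen_map_deriv] eigen_map_has_derivative)
  qed (use invf continuous_on_eigen_map_deriv that in
      \<open>simp_all add: bounded_linear_Blinfun_apply[OF bounded_linear_eigen_map_deriv]\<close>)
  show ?thesis
  proof (rule that)
    show "(gi has_derivative inv (eigen_map_deriv (gi y))) (at y)" if "y \<in> V" for y
      using ift(6,7)[OF that] by simp
  qed (use ift \<open>eigen_map x0 = (0, 0, 0)\<close> in \<open>simp_all add: x0_def\<close>)
qed

lemma isCont_inv_eigen_map_deriv_slice:
  assumes hom: "homeomorphism U V eigen_map gi" and "open V" "(0, 0, 0) \<in> V"
    and bij: "\<And>y. y \<in> V \<Longrightarrow> bij (eigen_map_deriv (gi y))"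
  shows "isCont (\<lambda>th. inv (eigen_map_deriv (gi (th, 0, 0))) z) 0"
proof -
  have "isCont gi (0, 0, 0)"
    using homeomorphism_cont2[OF hom] assms(2,3) by (simp add: continuous_on_eq_continuous_at)
  moreover have "isCont (\<lambda>th::real ^ 'd. (th, 0::complex, 0::complex ^ 's)) 0"
    by (intro continuous_intros)
  ultimately have "isCont (\<lambda>th. gi (th, 0, 0)) 0"
    using isCont_o2 by fastforce
  moreover have "isCont (\<lambda>x. Blinfun (eigen_map_deriv x)) (gi (0, 0, 0))"
    using continuous_on_eigen_map_deriv continuous_on_eq_continuous_at open_UNIV UNIV_I by blast
  ultimately have "isCont (\<lambda>th. Blinfun (eigen_map_deriv (gi (th, 0, 0)))) 0"
    by (rule isCont_o2)
  moreover have "open ((\<lambda>th. (th, 0, 0)) -` V :: (real ^ 'd) set)"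
    by (rule continuous_open_vimage) (simp_all add: \<open>open V\<close> continuous_intros)
  from eventually_nhds_in_open[OF this] assms(3)
  have "\<forall>\<^sub>F th in nhds 0. (th, 0, 0) \<in> V" by simp
  then have "\<forall>\<^sub>F th in nhds 0. bij (blinfun_apply (Blinfun (eigen_map_deriv (gi (th, 0, 0)))))"
    by eventually_elim (simp_all add: bounded_linear_Blinfun_apply[OF bounded_linear_eigen_map_deriv] bij)
  ultimately have "isCont (\<lambda>th. inv (blinfun_apply (Blinfun (eigen_map_deriv (gi (th, 0, 0))))) z) 0"
    by (rule isCont_inv_blinfun_apply)
  then show ?thesis
    by (simp add: bounded_linear_Blinfun_apply[OF bounded_linear_eigen_map_deriv])
qed

lemma eigen_branch_exists:
  obtains N W lam vv lam' vv' where "eigen_branch A DA p e N W lam vv lam' vv'"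
proof -
  obtain U V gi where U: "open U" "(0, 1, e) \<in> U" and V: "open V" "(0, 0, 0) \<in> V"
    and hom: "homeomorphism U V eigen_map gi"
    and gi_has_derivative: "\<And>y. y \<in> V \<Longrightarrow> (gi has_derivative inv (eigen_map_deriv (gi y))) (at y)"
    and bij: "\<And>y. y \<in> V \<Longrightarrow> bij (eigen_map_deriv (gi y))"
    using eigen_map_local_inverse by blast
  \<comment> \<open>The branch is \<open>gi\<close> on the slice \<open>{(th, 0, 0)}\<close>, where the eigen-equations hold.\<close>
  define emb :: "real ^ 'd \<Rightarrow> ('d, 's) eigen_triple" where "emb th = (th, 0, 0)" for th
  define N where "N = emb -` V"
  define lam where "lam th = fst (snd (gi (emb th)))" for th
  define vv where "vv th = snd (snd (gi (emb th)))" for th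
  define D where "D th h = inv (eigen_map_deriv (gi (emb th))) (h, 0, 0)" for th h
  have "open N" unfolding N_def emb_def by (rule continuous_open_vimage) (simp_all add: V continuous_intros)
  have "0 \<in> N" using V by (simp add: N_def emb_def)
  have sol: "gi (emb th) = (th, lam th, vv th) \<and> A th *v vv th = lam th *s vv th \<and> vdot p (vv th) = 1"
    if "th \<in> N" for th
  proof -
    obtain th' l v where "gi (emb th) = (th', l, v)" by (cases "gi (emb th)")
    moreover have "eigen_map (gi (emb th)) = emb th"
      using homeomorphism_apply2[OF hom] that by (simp add: N_def)
    ultimately show ?thesis by (simp add: lam_def vv_def emb_def eigen_map_eq_slice_iff)
  qed
  have gi_emb: "((\<lambda>th. gi (emb th)) has_derivative D th) (at th)" if "th \<in> N" for th
  proof -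
    have "(emb has_derivative (\<lambda>h. (h, 0, 0))) (at th)"
      unfolding emb_def by (intro has_derivative_Pair has_derivative_ident has_derivative_const)
    from has_derivative_compose[OF this gi_has_derivative] that show ?thesis
      by (simp add: N_def D_def[abs_def])
  qed
  have "(lam has_derivative (\<lambda>h. fst (snd (D th h)))) (at th)" if "th \<in> N" for th
    unfolding lam_def[abs_def] using gi_emb[OF that] by (intro has_derivative_fst has_derivative_snd)
  moreover have "(vv has_derivative (\<lambda>h. snd (snd (D th h)))) (at th)" if "th \<in> N" for th
    unfolding vv_def[abs_def] using gi_emb[OF that] by (intro has_derivative_snd)
  moreover have "lam 0 = 1" "vv 0 = e"
    using homeomorphism_apply1[OF hom U(2)] by (simp_all add: lam_def vv_def emb_def eigen_map_def
        vdot_p_e right_eigen)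
  moreover have "isCont (\<lambda>th. snd (snd (D th h))) 0" for h
    using isCont_inv_eigen_map_deriv_slice[OF hom V bij] unfolding D_def emb_def isCont_def
    by (intro tendsto_snd)
  moreover have "l = lam th" if "(th, l, v) \<in> U" "A th *v v = l *s v" "vdot p v = 1" for th l v
  proof -
    have ph: "eigen_map (th, l, v) = emb th" using that by (simp add: emb_def eigen_map_eq_slice_iff)
    then have "emb th \<in> V" using homeomorphism_image1[OF hom] that(1) by (metis image_eqI)
    then have "th \<in> N" by (simp add: N_def)
    moreover have "gi (emb th) = (th, l, v)" using homeomorphism_apply1[OF hom that(1)] ph by simp
    ultimately show ?thesis using sol by simp
  qed
  ultimately have "eigen_branch A DA p e N U lam vv (\<lambda>th h. fst (snd (D th h))) (\<lambda>th h. snd (snd (D th h)))"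
    using \<open>open N\<close> \<open>0 \<in> N\<close> sol U
    by (intro eigen_branch.intro eigen_branch_axioms.intro simple_eigen_perturbation_axioms) simp_all
  then show ?thesis by (rule that)
qed

end

context eigen_branch
begin

lemma vdot_vv':
  assumes "th \<in> N"
  shows "vdot p (vv' th h) = 0"
proof -
  have "(\<lambda>h. 0) = (\<lambda>h. vdot p (vv' th h))"
    by (rule has_derivative_eq_on_open[OF open_N assms _ has_derivative_const
          bounded_linear.has_derivative[OF bounded_linear_vdot vv_has_derivative[OF assms]]])
      (simp add: vdot_vv)
  then show ?thesis by (metis (no_types))
qed

lemma derivative_eigen_eq:
  assumes "th \<in> N"
  shows "A th *v vv' th h + DA th h *v vv th = lam th *s vv' th h + lam' th h *s vv th"
proof -
  have d1: "((\<lambda>t. A t *v vv t) has_derivative (\<lambda>h. A th *v vv' th h + DA th h *v vv th)) (at th)"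
    using bounded_bilinear.FDERIV[OF bounded_bilinear_matrix_vector_mult A_has_derivative
        vv_has_derivative[OF assms]] by simp
  have d2: "((\<lambda>t. lam t *s vv t) has_derivative (\<lambda>h. lam th *s vv' th h + lam' th h *s vv th)) (at th)"
    using bounded_bilinear.FDERIV[OF bounded_bilinear_vector_scalar_mult lam_has_derivative[OF assms]
        vv_has_derivative[OF assms]] by simp
  have "(\<lambda>h. A th *v vv' th h + DA th h *v vv th) = (\<lambda>h. lam th *s vv' th h + lam' th h *s vv th)"
    by (rule has_derivative_eq_on_open[OF open_N assms _ d1 d2]) (simp add: eigen_eq)
  then show ?thesis by (metis (no_types))
qed

lemma lam'_eq:
  assumes "th \<in> N"
  shows "lam' th h = vdot p ((A th - A 0) *v vv' th h) + vdot p (DA th h *v vv th)"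
proof -
  have "lam' th h = vdot p (A th *v vv' th h + DA th h *v vv th)"
    using derivative_eigen_eq[OF assms, of h] vdot_vv[OF assms] vdot_vv'[OF assms]
    by (simp add: vdot_simps)
  also have "\<dots> = vdot p ((A th - A 0) *v vv' th h) + vdot p (DA th h *v vv th)"
    using vdot_left_eigen vdot_vv'[OF assms]
    by (simp add: matrix_vector_mult_diff_rdistrib vdot_simps)
  finally show ?thesis .
qed

text \<open>The gradient of \<open>lam\<close>, written so that it is differentiable at \<open>0\<close> although only the first
  derivative of \<open>vv\<close> is available: \<open>A th - A 0\<close> vanishes at \<open>0\<close>.\<close>
definition gradient :: "real ^ 'd \<Rightarrow> complex ^ 'd" where
  "gradient th = (\<chi> l. vdot p ((A th - A 0) *v vv' th (axis l 1)) + vdot p (DA th (axis l 1) *v vv th))"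

lemma lam_has_derivative_gradient:
  assumes "th \<in> N"
  shows "(lam has_derivative (\<lambda>h. \<Sum>l\<in>UNIV. gradient th $ l * of_real (h $ l))) (at th)"
proof -
  have "lam' th = (\<lambda>h. \<Sum>l\<in>UNIV. gradient th $ l * of_real (h $ l))"
  proof
    fix h
    have lin: "linear (lam' th)"
      using lam_has_derivative[OF assms] has_derivative_linear by blast
    have "lam' th h = lam' th (\<Sum>l\<in>UNIV. h $ l *\<^sub>R axis l 1)"
      using basis_expansion[of h] by (simp add: scalar_mult_eq_scaleR)
    also have "\<dots> = (\<Sum>l\<in>UNIV. h $ l *\<^sub>R lam' th (axis l 1))"
      using lin by (simp add: linear_sum linear_scale)
    finally
    show "lam' th h = (\<Sum>l\<in>UNIV. gradient th $ l * of_real (h $ l))"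
      by (simp add: gradient_def lam'_eq[OF assms] scaleR_conv_of_real mult.commute)
  qed
  then show ?thesis
    using lam_has_derivative[OF assms] by simp
qed

lemma gradient_0: "gradient 0 = (\<chi> l. vdot p (DA 0 (axis l 1) *v e))"
  by (simp add: gradient_def vv_0 vdot_simps)

lemma vv'_0_eq_0:
  assumes "DA 0 h *v e = c *s e"
  shows "vv' 0 h = 0"
proof -
  define w where "w = vv' 0 h"
  have "A 0 *v w + c *s e = w + lam' 0 h *s e"
    using derivative_eigen_eq[OF zero_in_N, of h] assms by (simp add: w_def lam_0 vv_0)
  then have "A 0 *v w = w + lam' 0 h *s e - c *s e"
    by (metis add_diff_cancel_right')
  then have eq: "A 0 *v w - w = (lam' 0 h - c) *s e"
    by (simp add: vec_eq_iff algebra_simps)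
  then have "vdot p (A 0 *v w - w) = (lam' 0 h - c) * vdot p e"
    by (simp only: vdot_simps(3)[symmetric])
  then have "lam' 0 h - c = 0"
    using vdot_left_eigen[of w] vdot_p_e by (simp add: vdot_simps)
  then obtain c' where "w = c' *s e"
    using eq eigenspace_1 by auto
  with vdot_vv'[OF zero_in_N, of h] vdot_p_e show ?thesis
    by (simp add: w_def vdot_simps)
qed

lemma gradient_has_derivative:
  assumes "\<And>h. vv' 0 h = 0" and "\<And>l. ((\<lambda>th. DA th (axis l 1)) has_derivative D2 l) (at 0)"
  shows "(gradient has_derivative (\<lambda>h. \<chi> l. vdot p (D2 l h *v e))) (at 0)"
proof (rule has_derivative_vecI)
  fix l
  have "((\<lambda>th. A th - A 0) has_derivative DA 0) (at 0)"
    using has_derivative_diff[OF A_has_derivative has_derivative_const] by simp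
  from has_derivative_bilinear_vanishing[OF bounded_bilinear_matrix_vector_mult this _ isCont_vv']
  have "((\<lambda>th. (A th - A 0) *v vv' th (axis l 1)) has_derivative (\<lambda>h. 0)) (at 0)"
    using assms(1) by simp
  from bounded_linear.has_derivative[OF bounded_linear_vdot this]
  have "((\<lambda>th. vdot p ((A th - A 0) *v vv' th (axis l 1))) has_derivative (\<lambda>h. 0)) (at 0)"
    by (simp add: vdot_simps)
  moreover have "((\<lambda>th. vdot p (DA th (axis l 1) *v vv th)) has_derivative (\<lambda>h. vdot p (D2 l h *v e))) (at 0)"
    using bounded_linear.has_derivative[OF bounded_linear_vdot bounded_bilinear.FDERIV[OF
          bounded_bilinear_matrix_vector_mult assms(2) vv_has_derivative[OF zero_in_N]]]
    by (simp add: assms(1) vv_0)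
  ultimately show "((\<lambda>th. gradient th $ l) has_derivative (\<lambda>h. (\<chi> l. vdot p (D2 l h *v e)) $ l)) (at 0)"
    unfolding gradient_def by (simp add: has_derivative_add[THEN has_derivative_eq_rhs])
qed

lemma is_eigenvalue_lam:
  assumes "th \<in> N"
  shows "is_eigenvalue (A th) (lam th)"
proof -
  have "vv th \<noteq> 0" using vdot_vv[OF assms] by (auto simp: vdot_simps)
  with eigen_eq[OF assms] show ?thesis unfolding is_eigenvalue_def by blast
qed

lemma isCont_lam: "isCont lam 0"
  using lam_has_derivative[OF zero_in_N] by (rule has_derivative_continuous)

lemma eigenpair_tendsto_branch:
  assumes th: "th \<longlonglongrightarrow> 0" and l: "l \<longlonglongrightarrow> 1" and u: "u \<longlonglongrightarrow> c *s e" and "c \<noteq> 0"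
    and eigen: "\<And>n. A (th n) *v u n = l n *s u n"
  shows "\<exists>n. l n = lam (th n)"
proof -
  have pu: "(\<lambda>n. vdot p (u n)) \<longlonglongrightarrow> c"
    using bounded_linear.tendsto[OF bounded_linear_vdot u, of p] vdot_p_e by (simp add: vdot_simps)
  define v where "v n = (1 / vdot p (u n)) *s u n" for n
  have "v \<longlonglongrightarrow> (1 / c) *s (c *s e)"
    unfolding v_def
    by (intro bounded_bilinear.tendsto[OF bounded_bilinear_vector_scalar_mult] tendsto_divide tendsto_const pu u \<open>c \<noteq> 0\<close>)
  then have "(\<lambda>n. (th n, l n, v n)) \<longlonglongrightarrow> (0, 1, e)"
    using th l \<open>c \<noteq> 0\<close> by (intro tendsto_Pair) (auto simp: vector_smult_assoc)
  then have "eventually (\<lambda>n. (th n, l n, v n) \<in> W) sequentially"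
    using open_W in_W by (rule topological_tendstoD)
  moreover have "eventually (\<lambda>n. vdot p (u n) \<noteq> 0) sequentially"
    using pu \<open>c \<noteq> 0\<close> by (rule tendsto_imp_eventually_ne)
  ultimately obtain n where n: "(th n, l n, v n) \<in> W" "vdot p (u n) \<noteq> 0"
    using eventually_happens'[OF sequentially_bot eventually_conj] by blast
  have "A (th n) *v v n = l n *s v n"
    by (simp add: v_def matrix_vector_mult_smult eigen vector_smult_assoc mult.commute)
  moreover have "vdot p (v n) = 1" using n(2) by (simp add: v_def vdot_simps)
  ultimately show ?thesis using unique_in_W[OF n(1)] by blast
qed

text \<open>If the leading eigenvalue stayed off the branch along \<open>th n \<rightarrow> 0\<close>, a limit of its unit
  eigenvectors would be an eigenvector of \<open>A 0\<close> for \<open>1\<close>, i.e. a multiple of \<open>e\<close>,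
  and near \<open>(0, 1, e)\<close> the eigenpairs all lie on the branch.\<close>
lemma leading_eigenvalue_sequence_on_branch:
  assumes bound: "\<And>th l. is_eigenvalue (A th) l \<Longrightarrow> cmod l \<le> 1"
    and leading: "\<And>th. th \<in> U \<Longrightarrow> leading_eigenvalue (A th) (k th)" and "0 \<in> U"
    and th: "th \<longlonglongrightarrow> 0" "\<And>n. th n \<in> U \<inter> N"
  shows "\<exists>n. k (th n) = lam (th n)"
proof (rule ccontr)
  assume ne: "\<not> ?thesis"
  have "\<exists>u. u \<noteq> 0 \<and> A (th n) *v u = k (th n) *s u" for n
    using leading th(2) unfolding leading_eigenvalue_def is_eigenvalue_def by blast
  then obtain u where u: "\<And>n. u n \<noteq> 0" "\<And>n. A (th n) *v u n = k (th n) *s u n" by metis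
  define un where "un n = (1 / norm (u n)) *\<^sub>R u n" for n
  have un: "A (th n) *v un n = k (th n) *s un n" "norm (un n) = 1" for n
    using u[of n] by (simp_all add: un_def bounded_bilinear.scaleR_right[OF bounded_bilinear_matrix_vector_mult]
        bounded_bilinear.scaleR_right[OF bounded_bilinear_vector_scalar_mult])
  have k_le: "cmod (k (th n)) \<le> 1" for n
    using bound leading th(2) unfolding leading_eigenvalue_def by blast
  have A_lim: "(\<lambda>n. A (th n)) \<longlonglongrightarrow> A 0"
    using isCont_tendsto_compose[OF has_derivative_continuous[OF A_has_derivative] th(1)] .
  obtain r l0 u0 where r: "strict_mono r" and kr: "(\<lambda>n. k (th (r n))) \<longlonglongrightarrow> l0"
    and ur: "(\<lambda>n. un (r n)) \<longlonglongrightarrow> u0" and "norm u0 = 1" and u0: "A 0 *v u0 = l0 *s u0"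
    by (rule eigenpair_convergent_subseq[OF A_lim un k_le])
  have thr: "(\<lambda>n. th (r n)) \<longlonglongrightarrow> 0" using LIMSEQ_subseq_LIMSEQ[OF th(1) r] by (simp add: o_def)
  have "cmod (lam (th (r n))) \<le> cmod (k (th (r n)))" for n
  proof -
    have "lam (th (r n)) \<noteq> k (th (r n))" using ne by (metis (full_types))
    with th(2)[of "r n"] show ?thesis
      using leading is_eigenvalue_lam unfolding leading_eigenvalue_def by (simp add: less_imp_le)
  qed
  then have "cmod 1 \<le> cmod l0"
    using isCont_tendsto_compose[OF isCont_lam thr] lam_0
    by (intro tendsto_le[OF sequentially_bot tendsto_norm[OF kr] tendsto_norm]) auto
  moreover have "k 0 = 1"
    using leading_eigenvalue_0 leading[OF \<open>0 \<in> U\<close>] bound by blast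
  moreover have "is_eigenvalue (A 0) l0"
    using u0 \<open>norm u0 = 1\<close> unfolding is_eigenvalue_def by (intro exI[of _ u0]) auto
  ultimately have "l0 = 1"
    using leading[OF \<open>0 \<in> U\<close>] unfolding leading_eigenvalue_def by force
  then obtain c where c: "u0 = c *s e" using eigenspace_1 u0 by auto
  have "c \<noteq> 0" using c \<open>norm u0 = 1\<close> by auto
  from eigenpair_tendsto_branch[OF thr _ ur[unfolded c] this] kr \<open>l0 = 1\<close> un(1) ne show False
    by blast
qed

lemma eventually_leading_eigenvalue_eq_lam:
  assumes "\<And>th l. is_eigenvalue (A th) l \<Longrightarrow> cmod l \<le> 1"
    and "open U" "0 \<in> U" "\<And>th. th \<in> U \<Longrightarrow> leading_eigenvalue (A th) (k th)"
  shows "\<forall>\<^sub>F th in nhds 0. k th = lam th"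
proof -
  define S where "S = {th \<in> U \<inter> N. k th \<noteq> lam th}"
  have "eventually (\<lambda>th. th \<in> S \<longrightarrow> False) (nhds 0)"
  proof (subst eventually_inf_principal[symmetric], rule sequentially_imp_eventually_nhds_within, safe)
    fix th :: "nat \<Rightarrow> real ^ 'd" assume th: "\<forall>n. th n \<in> S" "th \<longlonglongrightarrow> 0"
    then have "\<exists>n. k (th n) = lam (th n)"
      by (intro leading_eigenvalue_sequence_on_branch[where U = U]) (use assms in \<open>auto simp: S_def\<close>)
    with th(1) show "\<forall>\<^sub>F n in sequentially. False"
      by (auto simp: S_def)
  qed
  moreover have "eventually (\<lambda>th. th \<in> U \<inter> N) (nhds 0)"
    using assms(2,3) open_N zero_in_N by (intro eventually_nhds_in_open) auto
  ultimately show ?thesis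
    by eventually_elim (auto simp: S_def)
qed

end

section \<open>The transition matrix of the modulating chain\<close>

lemma Pn_nonneg:
  assumes "MA_kernel mu"
  shows "0 \<le> Pn mu n i j x"
proof (induction n arbitrary: j x)
  case (Suc n)
  then have "0 \<le> Pn mu n i l y * mu l j (x - y)" for l y
    using assms unfolding MA_kernel_def by simp
  then show ?case by (simp add: sum_nonneg infsum_nonneg)
qed simp

lemma Pn_Suc_posE:
  assumes "MA_kernel mu" "Pn mu (Suc n) i j x > 0"
  obtains l y where "Pn mu n i l y > 0" "mu l j (x - y) > 0"
proof -
  have sum_ne: "(\<Sum>l\<in>UNIV. infsum (\<lambda>y. Pn mu n i l y * mu l j (x - y)) UNIV) \<noteq> 0"
    using assms(2) by (simp only: Pn.simps(2))
  have "\<exists>l. infsum (\<lambda>y. Pn mu n i l y * mu l j (x - y)) UNIV \<noteq> 0"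
  proof (rule ccontr)
    assume "\<not> ?thesis"
    then have "(\<Sum>l\<in>UNIV. infsum (\<lambda>y. Pn mu n i l y * mu l j (x - y)) UNIV) = 0" by (intro sum.neutral) auto
    with sum_ne show False by contradiction
  qed
  then obtain l where l: "infsum (\<lambda>y. Pn mu n i l y * mu l j (x - y)) UNIV \<noteq> 0" ..
  have "\<exists>y. Pn mu n i l y * mu l j (x - y) \<noteq> 0"
  proof (rule ccontr)
    assume "\<not> ?thesis"
    then have "infsum (\<lambda>y. Pn mu n i l y * mu l j (x - y)) UNIV = 0" by (intro infsum_0) auto
    with l show False by contradiction
  qed
  then obtain y where "Pn mu n i l y * mu l j (x - y) \<noteq> 0" ..
  moreover have "0 \<le> Pn mu n i l y" "0 \<le> mu l j (x - y)"
    using Pn_nonneg[OF assms(1)] assms(1) unfolding MA_kernel_def by auto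
  ultimately show ?thesis
    by (intro that[of l y]) (simp_all add: order_less_le)
qed

lemma Mtrans_nonneg: "MA_kernel mu \<Longrightarrow> 0 \<le> Mtrans mu i j"
  unfolding MA_kernel_def Mtrans_def by (simp add: infsum_nonneg)

lemma sum_Mtrans: "MA_kernel mu \<Longrightarrow> (\<Sum>j\<in>UNIV. Mtrans mu i j) = 1"
  unfolding MA_kernel_def Mtrans_def by simp

lemma Mtrans_pos:
  assumes "MA_kernel mu" "mu i j z > 0"
  shows "Mtrans mu i j > 0"
proof -
  have "sum (mu i j) {z} \<le> infsum (mu i j) UNIV"
    using assms unfolding MA_kernel_def by (intro finite_sum_le_infsum) auto
  then show ?thesis using assms(2) by (simp add: Mtrans_def)
qed

lemma harmonic_max_step:
  assumes K: "MA_kernel mu" and harm: "\<And>i. (\<Sum>j\<in>UNIV. Mtrans mu i j * u j) = u i"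
    and max: "\<And>j. u j \<le> u l" and "Mtrans mu l j > 0"
  shows "u j = u l"
proof -
  have "(\<Sum>k\<in>UNIV. Mtrans mu l k * (u l - u k)) = u l * (\<Sum>k\<in>UNIV. Mtrans mu l k) - (\<Sum>k\<in>UNIV. Mtrans mu l k * u k)"
    by (simp add: algebra_simps sum_subtractf sum_distrib_left)
  also have "\<dots> = 0" using sum_Mtrans[OF K, of l] harm[of l] by simp
  finally have "Mtrans mu l j * (u l - u j) = 0"
    using Mtrans_nonneg[OF K] max by (simp add: sum_nonneg_eq_0_iff)
  then show ?thesis using \<open>Mtrans mu l j > 0\<close> by simp
qed

lemma harmonic_const:
  fixes u :: "'s::finite \<Rightarrow> real"
  assumes K: "MA_kernel mu" and I: "MA_irreducible mu"
    and harm: "\<And>i. (\<Sum>j\<in>UNIV. Mtrans mu i j * u j) = u i"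
  shows "u i = u j"
proof -
  have "Max (range u) \<in> range u"
    by (rule Max_in) simp_all
  then obtain i0 where i0: "Max (range u) = u i0"
    by (rule rangeE)
  have max: "u j \<le> u i0" for j
    unfolding i0[symmetric] by (rule Max_ge) simp_all
  have "u j = u i0" if "Pn mu n i0 j x > 0" for n j x
    using that
  proof (induction n arbitrary: j x)
    case 0 then show ?case by (simp split: if_splits)
  next
    case (Suc n)
    then obtain l y where "Pn mu n i0 l y > 0" and ly: "mu l j (x - y) > 0"
      using Pn_Suc_posE[OF K] by blast
    from this(1) have "u l = u i0" by (rule Suc.IH)
    then have "u j' \<le> u l" for j' using max by simp
    then have "u j = u l" by (rule harmonic_max_step[OF K harm _ Mtrans_pos[OF K ly]])
    with \<open>u l = u i0\<close> show ?case by simp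
  qed
  moreover have "\<exists>n. Pn mu n i0 k 0 > 0" for k
    using I unfolding MA_irreducible_def by blast
  ultimately have "u k = u i0" for k by blast
  from this[of i] this[of j] show ?thesis by (rule trans[OF _ sym])
qed

definition trans_matrix :: "('s::finite \<Rightarrow> 's \<Rightarrow> int ^ 'd \<Rightarrow> real) \<Rightarrow> complex ^ 's ^ 's" where
  "trans_matrix mu = (\<chi> i j. complex_of_real (Mtrans mu i j))"

definition prob_vec :: "('s::finite \<Rightarrow> real) \<Rightarrow> complex ^ 's" where
  "prob_vec pr = (\<chi> i. complex_of_real (pr i))"

lemma trans_matrix_mult_ones: "MA_kernel mu \<Longrightarrow> trans_matrix mu *v 1 = 1"
  by (simp add: trans_matrix_def matrix_vector_mult_def vec_eq_iff sum_Mtrans flip: of_real_sum)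

lemma vdot_prob_vec_ones: "stationary mu pr \<Longrightarrow> vdot (prob_vec pr) 1 = 1"
  unfolding stationary_def vdot_def prob_vec_def by (simp flip: of_real_sum)

lemma vdot_prob_vec_trans_matrix:
  assumes "stationary mu pr"
  shows "vdot (prob_vec pr) (trans_matrix mu *v w) = vdot (prob_vec pr) w"
proof -
  have "vdot (prob_vec pr) (trans_matrix mu *v w)
      = (\<Sum>i\<in>UNIV. \<Sum>j\<in>UNIV. complex_of_real (pr i * Mtrans mu i j) * w $ j)"
    unfolding vdot_def prob_vec_def trans_matrix_def matrix_vector_mult_def
    by (simp add: sum_distrib_left mult.assoc)
  also have "\<dots> = (\<Sum>j\<in>UNIV. (\<Sum>i\<in>UNIV. complex_of_real (pr i * Mtrans mu i j)) * w $ j)"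
    by (subst sum.swap) (simp add: sum_distrib_right)
  also have "\<dots> = vdot (prob_vec pr) w"
  proof -
    have "(\<Sum>i\<in>UNIV. pr i * Mtrans mu i j) = pr j" for j
      using assms unfolding stationary_def by blast
    then have "(\<Sum>i\<in>UNIV. complex_of_real (pr i * Mtrans mu i j)) = complex_of_real (pr j)" for j
      by (simp only: of_real_sum[symmetric])
    then show ?thesis by (simp only: vdot_def prob_vec_def vec_lambda_beta)
  qed
  finally show ?thesis .
qed

lemma trans_matrix_fixed_point:
  assumes K: "MA_kernel mu" and I: "MA_irreducible mu" and w: "trans_matrix mu *v w = w"
  shows "\<exists>c. w = c *s 1"
proof -
  have eq: "(\<Sum>j\<in>UNIV. complex_of_real (Mtrans mu i j) * w $ j) = w $ i" for i
    using arg_cong[OF w, of "\<lambda>v. v $ i"] by (simp add: trans_matrix_def matrix_vector_mult_def)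
  have re: "(\<Sum>j\<in>UNIV. Mtrans mu i j * Re (w $ j)) = Re (w $ i)"
    and im: "(\<Sum>j\<in>UNIV. Mtrans mu i j * Im (w $ j)) = Im (w $ i)" for i
    using arg_cong[OF eq[of i], of Re] arg_cong[OF eq[of i], of Im] by (simp_all add: Re_sum Im_sum)
  have "Re (w $ i) = Re (w $ j)" "Im (w $ i) = Im (w $ j)" for i j
    by (rule harmonic_const[OF K I re], rule harmonic_const[OF K I im])
  then have "w $ i = w $ j" for i j
    by (simp add: complex_eq_iff)
  then have "w = w $ undefined *s 1"
    by (simp add: vec_eq_iff)
  then show ?thesis ..
qed

section \<open>Change of section\<close>

definition sec_pos :: "('s \<Rightarrow> real ^ 'd) \<Rightarrow> 's \<Rightarrow> 's \<Rightarrow> int ^ 'd \<Rightarrow> real ^ 'd" where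
  "sec_pos g i j z = intvec z - (g j - g i)"

text \<open>The Fourier transform of \<open>\<^sup>g\<mu>\<close>, indexed by the lattice rather than by \<open>\<real>\<^sup>d\<close>.\<close>
definition muhat_sec ::
    "('s::finite \<Rightarrow> 's \<Rightarrow> int ^ 'd \<Rightarrow> real) \<Rightarrow> ('s \<Rightarrow> real ^ 'd) \<Rightarrow> real ^ 'd \<Rightarrow> complex ^ 's ^ 's" where
  "muhat_sec mu g = fourier_matrix (sec_pos g) (\<lambda>i j x. complex_of_real (mu i j x))"

definition muhat_sec_deriv ::
    "('s::finite \<Rightarrow> 's \<Rightarrow> int ^ 'd \<Rightarrow> real) \<Rightarrow> ('s \<Rightarrow> real ^ 'd) \<Rightarrow> real ^ 'd \<Rightarrow> real ^ 'd \<Rightarrow> complex ^ 's ^ 's" where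
  "muhat_sec_deriv mu g = fourier_matrix_deriv (sec_pos g) (\<lambda>i j x. complex_of_real (mu i j x))"

lemma intvec_inj: "intvec z = intvec z' \<Longrightarrow> z = z'"
  by (simp add: vec_eq_iff intvec_def)

lemma has_sum_sec_mu_iff:
  fixes F :: "real ^ 'd \<Rightarrow> 'b::real_normed_vector"
  shows "((\<lambda>x. sec_mu mu g i j x *\<^sub>R F x) has_sum S) UNIV \<longleftrightarrow>
         ((\<lambda>z. mu i j z *\<^sub>R F (sec_pos g i j z)) has_sum S) UNIV"
proof -
  have inj: "inj (sec_pos g i j)"
    unfolding sec_pos_def inj_on_def using intvec_inj by auto
  have sec_mu_pos: "sec_mu mu g i j (sec_pos g i j z) = mu i j z" for z
  proof -
    have "sec_pos g i j z + g j - g i = intvec z" by (simp add: sec_pos_def)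
    moreover have "(THE z'. intvec z' = intvec z) = z" using intvec_inj by blast
    ultimately show ?thesis unfolding sec_mu_def by auto
  qed
  have "sec_mu mu g i j x = 0" if "x \<notin> range (sec_pos g i j)" for x
  proof -
    have "intvec z \<noteq> x + g j - g i" for z
    proof
      assume "intvec z = x + g j - g i"
      then have "x = sec_pos g i j z" by (simp add: sec_pos_def algebra_simps)
      with that show False by blast
    qed
    then show ?thesis by (auto simp: sec_mu_def)
  qed
  then have "((\<lambda>x. sec_mu mu g i j x *\<^sub>R F x) has_sum S) UNIV \<longleftrightarrow>
      ((\<lambda>x. sec_mu mu g i j x *\<^sub>R F x) has_sum S) (range (sec_pos g i j))"
    by (intro has_sum_cong_neutral) auto
  also have "\<dots> \<longleftrightarrow> ((\<lambda>z. mu i j z *\<^sub>R F (sec_pos g i j z)) has_sum S) UNIV"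
    by (subst has_sum_reindex[OF inj]) (simp add: o_def sec_mu_pos)
  finally show ?thesis .
qed

lemma has_moment_sec_pos:
  assumes "exp_moments mu"
  shows "has_moment (sec_pos g i j) n (\<lambda>x. complex_of_real (mu i j x))"
proof (rule has_moment_if_exp_summable)
  have "(\<lambda>x. exp (1 * norm (intvec x)) * mu i j x) summable_on UNIV"
    using assms zero_less_one unfolding exp_moments_def by blast
  then have "(\<lambda>x. exp (norm (intvec x)) * mu i j x) summable_on UNIV"
    by simp
  then have "(\<lambda>x. norm (exp (norm (intvec x)) * mu i j x)) summable_on UNIV"
    by (rule summable_on_iff_abs_summable_on_real[THEN iffD1])
  then have "(\<lambda>x. exp (norm (intvec x)) * norm (complex_of_real (mu i j x))) summable_on UNIV"
    by (simp add: abs_mult)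
  from exp_summable_translate[OF this, of "g j - g i"]
  show "(\<lambda>x. exp (norm (sec_pos g i j x)) * norm (complex_of_real (mu i j x))) summable_on UNIV"
    by (simp add: sec_pos_def)
qed

lemma muhat_sec_apply:
  "muhat_sec mu g th $ i $ j = muhat mu th $ i $ j * cis (- (g j \<bullet> th)) / cis (- (g i \<bullet> th))"
proof -
  have "muhat_sec mu g th $ i $ j = cis (- ((g j - g i) \<bullet> th)) * fourier_sum intvec (\<lambda>x. complex_of_real (mu i j x)) th"
    by (simp add: muhat_sec_def fourier_matrix_def sec_pos_def[abs_def] fourier_sum_translate)
  moreover have "fourier_sum intvec (\<lambda>x. complex_of_real (mu i j x)) th = muhat mu th $ i $ j"
    by (simp add: muhat_def fourier_sum_def)
  moreover have "cis (- ((g j - g i) \<bullet> th)) = cis (- (g j \<bullet> th)) / cis (- (g i \<bullet> th))"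
    by (simp add: inner_diff_left cis_divide)
  ultimately show ?thesis by simp
qed

lemma leading_eigenvalue_muhat_sec:
  "leading_eigenvalue (muhat_sec mu g th) l \<longleftrightarrow> leading_eigenvalue (muhat mu th) l"
  by (rule leading_eigenvalue_diagonal_similar[where u = "\<lambda>j. cis (- (g j \<bullet> th))"])
    (simp_all add: muhat_sec_apply)

lemma norm_muhat_sec_le:
  assumes "MA_kernel mu"
  shows "cmod (muhat_sec mu g th $ i $ j) \<le> Mtrans mu i j"
proof -
  have "mu i j summable_on UNIV" "\<And>x. 0 \<le> mu i j x"
    using assms unfolding MA_kernel_def by simp_all
  then have "cmod (muhat mu th $ i $ j) \<le> infsum (\<lambda>x. norm (cis (intvec x \<bullet> th) * complex_of_real (mu i j x))) UNIV"
    unfolding muhat_def vec_lambda_beta by (intro norm_infsum_bound) (simp add: norm_mult)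
  also have "\<dots> = Mtrans mu i j"
    using \<open>\<And>x. 0 \<le> mu i j x\<close> by (simp add: norm_mult Mtrans_def)
  finally show ?thesis
    by (simp add: muhat_sec_apply norm_divide norm_mult)
qed

lemma is_eigenvalue_muhat_sec_le_1:
  assumes "MA_kernel mu" "is_eigenvalue (muhat_sec mu g th) l"
  shows "cmod l \<le> 1"
  using assms(2)
proof (rule is_eigenvalue_norm_le_row_sum)
  show "(\<Sum>j\<in>UNIV. cmod (muhat_sec mu g th $ i $ j)) \<le> 1" for i
    using sum_mono[of UNIV "\<lambda>j. cmod (muhat_sec mu g th $ i $ j)" "Mtrans mu i"] norm_muhat_sec_le[OF assms(1)]
      sum_Mtrans[OF assms(1), of i] by simp
qed

lemma muhat_sec_0: "MA_kernel mu \<Longrightarrow> muhat_sec mu g 0 = trans_matrix mu"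
  unfolding MA_kernel_def
  by (simp add: muhat_sec_def fourier_matrix_def trans_matrix_def fourier_sum_0 Mtrans_def vec_eq_iff
      infsumI[OF has_sum_of_real])

lemma simple_eigen_perturbation_muhat_sec:
  assumes "MA_kernel mu" "MA_irreducible mu" "exp_moments mu" "stationary mu pr"
  shows "simple_eigen_perturbation (muhat_sec mu g) (muhat_sec_deriv mu g) (prob_vec pr) 1"
proof
  show "(muhat_sec mu g has_derivative muhat_sec_deriv mu g th) (at th)" for th
    unfolding muhat_sec_def muhat_sec_deriv_def
    by (intro fourier_matrix_has_derivative has_moment_sec_pos assms(3))
  show "continuous_on UNIV (\<lambda>th. muhat_sec_deriv mu g th h)" for h
    unfolding muhat_sec_deriv_def
    by (intro continuous_on_fourier_matrix_deriv has_moment_sec_pos assms(3))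
qed (use assms in \<open>simp_all only: muhat_sec_0 trans_matrix_mult_ones vdot_prob_vec_trans_matrix
      vdot_prob_vec_ones trans_matrix_fixed_point\<close>)

lemma has_sum_sec_drift:
  assumes "exp_moments mu"
  shows "((\<lambda>z. mu i j z *\<^sub>R sec_pos g i j z) has_sum sec_drift mu g i j) UNIV"
proof -
  define S where "S = infsum (\<lambda>z. mu i j z *\<^sub>R sec_pos g i j z) UNIV"
  have "(\<lambda>z. norm (sec_pos g i j z) ^ 1 * norm (complex_of_real (mu i j z))) summable_on UNIV"
    using has_moment_sec_pos[OF assms] unfolding has_moment_def by blast
  then have "(\<lambda>z. mu i j z *\<^sub>R sec_pos g i j z) summable_on UNIV"
    by (rule summable_on_norm_le) (simp add: mult.commute)
  then have lattice: "((\<lambda>z. mu i j z *\<^sub>R sec_pos g i j z) has_sum S) UNIV"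
    unfolding S_def by (rule has_sum_infsum)
  then have "((\<lambda>x. sec_mu mu g i j x *\<^sub>R x) has_sum S) UNIV"
    by (simp only: has_sum_sec_mu_iff)
  then have "sec_drift mu g i j = S"
    unfolding sec_drift_def by (rule infsumI)
  with lattice show ?thesis by simp
qed

definition sec_moment2 :: "('s \<Rightarrow> 's \<Rightarrow> int ^ 'd \<Rightarrow> real) \<Rightarrow> ('s \<Rightarrow> real ^ 'd) \<Rightarrow> 's \<Rightarrow> 's \<Rightarrow> 'd \<Rightarrow> 'd \<Rightarrow> real" where
  "sec_moment2 mu g i j l q = infsum (\<lambda>z. mu i j z * (sec_pos g i j z $ l * sec_pos g i j z $ q)) UNIV"

lemma has_sum_sec_moment2:
  assumes "exp_moments mu"
  shows "((\<lambda>z. mu i j z * (sec_pos g i j z $ l * sec_pos g i j z $ q)) has_sum sec_moment2 mu g i j l q) UNIV"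
proof -
  have bound: "norm (mu i j z * (sec_pos g i j z $ l * sec_pos g i j z $ q))
      \<le> norm (sec_pos g i j z) ^ 2 * norm (complex_of_real (mu i j z))" for z
  proof -
    have "\<bar>sec_pos g i j z $ l\<bar> \<le> norm (sec_pos g i j z)" "\<bar>sec_pos g i j z $ q\<bar> \<le> norm (sec_pos g i j z)"
      by (rule component_le_norm_cart)+
    then have "\<bar>sec_pos g i j z $ l\<bar> * \<bar>sec_pos g i j z $ q\<bar> \<le> norm (sec_pos g i j z) * norm (sec_pos g i j z)"
      by (rule mult_mono) simp_all
    then have "\<bar>mu i j z\<bar> * (\<bar>sec_pos g i j z $ l\<bar> * \<bar>sec_pos g i j z $ q\<bar>)
        \<le> \<bar>mu i j z\<bar> * (norm (sec_pos g i j z) * norm (sec_pos g i j z))"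
      by (rule mult_left_mono) simp
    then show ?thesis
      by (simp add: abs_mult power2_eq_square mult_ac)
  qed
  have "(\<lambda>z. norm (sec_pos g i j z) ^ 2 * norm (complex_of_real (mu i j z))) summable_on UNIV"
    using has_moment_sec_pos[OF assms, of g i j 2] by (simp add: has_moment_def)
  then have "(\<lambda>z. mu i j z * (sec_pos g i j z $ l * sec_pos g i j z $ q)) summable_on UNIV"
    by (rule summable_on_norm_le) (rule bound)
  then show ?thesis
    unfolding sec_moment2_def by (rule has_sum_infsum)
qed

lemma energy_eq_sec_moment2:
  assumes "exp_moments mu"
  shows "energy mu pr g l q = (\<Sum>i\<in>UNIV. \<Sum>j\<in>UNIV. pr i * sec_moment2 mu g i j l q)"
proof -
  have "((\<lambda>x. sec_mu mu g i j x *\<^sub>R (pr i * (x $ l * x $ q))) has_sum pr i * sec_moment2 mu g i j l q) UNIV"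
    for i j
  proof -
    have "((\<lambda>z. mu i j z *\<^sub>R (pr i * (sec_pos g i j z $ l * sec_pos g i j z $ q)))
        has_sum pr i * sec_moment2 mu g i j l q) UNIV"
      using has_sum_cmult_right[OF has_sum_sec_moment2[OF assms], of "pr i"] by (simp add: mult_ac)
    then show ?thesis by (simp only: has_sum_sec_mu_iff)
  qed
  then have "((\<lambda>x. \<Sum>i\<in>UNIV. \<Sum>j\<in>UNIV. sec_mu mu g i j x *\<^sub>R (pr i * (x $ l * x $ q))) has_sum
      (\<Sum>i\<in>UNIV. \<Sum>j\<in>UNIV. pr i * sec_moment2 mu g i j l q)) UNIV"
    by (intro has_sum_sum) auto
  moreover have "(\<Sum>i\<in>UNIV. \<Sum>j\<in>UNIV. sec_mu mu g i j x *\<^sub>R (pr i * (x $ l * x $ q)))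
      = x $ l * x $ q * (\<Sum>i\<in>UNIV. \<Sum>j\<in>UNIV. pr i * sec_mu mu g i j x)" for x
    by (simp add: sum_distrib_left mult_ac)
  ultimately show ?thesis
    unfolding energy_def by (simp add: infsumI)
qed

text \<open>This is where appropriateness of \<open>g\<close> enters: all rows of the first-order perturbation have the
  same drift, so \<open>1\<close> stays an eigenvector to first order.\<close>
lemma muhat_sec_deriv_0_mult_ones:
  assumes "exp_moments mu" "appropriate mu pr g"
  shows "muhat_sec_deriv mu g 0 h *v 1 = (\<i> * of_real (global_drift mu pr \<bullet> h)) *s 1"
proof -
  have first_moment: "fourier_sum (sec_pos g i j) (icoord_mult (sec_pos g i j) q (\<lambda>x. complex_of_real (mu i j x))) 0
      = \<i> * of_real (sec_drift mu g i j $ q)" for i j q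
  proof -
    have "((\<lambda>z. (mu i j z *\<^sub>R sec_pos g i j z) $ q) has_sum sec_drift mu g i j $ q) UNIV"
      by (rule has_sum_bounded_linear[OF bounded_linear_vec_nth has_sum_sec_drift[OF assms(1)]])
    then have "((\<lambda>z. complex_of_real (sec_pos g i j z $ q * mu i j z)) has_sum of_real (sec_drift mu g i j $ q)) UNIV"
      by (intro has_sum_of_real) (simp add: mult.commute)
    from infsumI[OF this] show ?thesis
      by (simp add: fourier_sum_icoord_mult_0)
  qed
  have "(\<Sum>j\<in>UNIV. \<Sum>q\<in>UNIV. h $ q * sec_drift mu g i j $ q) = global_drift mu pr \<bullet> h" for i
  proof -
    have "(\<Sum>j\<in>UNIV. sec_drift mu g i j) = global_drift mu pr"
      using assms(2) unfolding appropriate_def by blast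
    from arg_cong[OF this, of "\<lambda>v. v $ q" for q]
    have "(\<Sum>j\<in>UNIV. sec_drift mu g i j $ q) = global_drift mu pr $ q" for q
      by (simp add: sum_component)
    moreover have "(\<Sum>j\<in>UNIV. \<Sum>q\<in>UNIV. h $ q * sec_drift mu g i j $ q)
        = (\<Sum>q\<in>UNIV. h $ q * (\<Sum>j\<in>UNIV. sec_drift mu g i j $ q))"
      by (subst sum.swap) (simp add: sum_distrib_left)
    ultimately show ?thesis
      by (simp add: inner_vec_def mult.commute)
  qed
  moreover have "(muhat_sec_deriv mu g 0 h *v 1) $ i
      = \<i> * of_real (\<Sum>j\<in>UNIV. \<Sum>q\<in>UNIV. h $ q * sec_drift mu g i j $ q)" for i
    by (simp add: muhat_sec_deriv_def fourier_matrix_deriv_def matrix_vector_mult_def first_moment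
        sum_distrib_left mult_ac)
  ultimately show ?thesis
    by (simp add: vec_eq_iff)
qed

lemma muhat_sec_deriv_axis_has_derivative:
  assumes "exp_moments mu"
  shows "((\<lambda>th. muhat_sec_deriv mu g th (axis l 1)) has_derivative
           fourier_matrix_deriv (sec_pos g) (\<lambda>i j. icoord_mult (sec_pos g i j) l (\<lambda>x. complex_of_real (mu i j x))) th)
         (at th)"
  unfolding muhat_sec_deriv_def fourier_matrix_deriv_axis
  by (intro fourier_matrix_has_derivative has_moment_icoord_mult has_moment_sec_pos assms)

lemma vdot_muhat_sec_second_deriv_ones:
  assumes "exp_moments mu"
  shows "vdot (prob_vec pr)
      (fourier_matrix_deriv (sec_pos g) (\<lambda>i j. icoord_mult (sec_pos g i j) l (\<lambda>x. complex_of_real (mu i j x))) 0 h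
        *v 1)
    = (\<Sum>q\<in>UNIV. - complex_of_real (energy mu pr g l q) * complex_of_real (h $ q))"
proof -
  have second_moment: "fourier_sum (sec_pos g i j) (icoord_mult (sec_pos g i j) q
        (icoord_mult (sec_pos g i j) l (\<lambda>x. complex_of_real (mu i j x)))) 0
      = - of_real (sec_moment2 mu g i j l q)" for i j q
  proof -
    have "((\<lambda>z. complex_of_real (mu i j z * (sec_pos g i j z $ l * sec_pos g i j z $ q)))
        has_sum of_real (sec_moment2 mu g i j l q)) UNIV"
      by (rule has_sum_of_real[OF has_sum_sec_moment2[OF assms]])
    from infsumI[OF this] show ?thesis
      by (simp add: fourier_sum_icoord_mult2_0 mult_ac)
  qed
  have "vdot (prob_vec pr)
      (fourier_matrix_deriv (sec_pos g) (\<lambda>i j. icoord_mult (sec_pos g i j) l (\<lambda>x. complex_of_real (mu i j x))) 0 h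
        *v 1)
    = - of_real (\<Sum>i\<in>UNIV. \<Sum>j\<in>UNIV. \<Sum>q\<in>UNIV. h $ q * (pr i * sec_moment2 mu g i j l q))"
    by (simp add: vdot_def prob_vec_def fourier_matrix_deriv_def matrix_vector_mult_def second_moment
        sum_distrib_left sum_negf mult_ac)
  also have "(\<Sum>i\<in>UNIV. \<Sum>j\<in>UNIV. \<Sum>q\<in>UNIV. h $ q * (pr i * sec_moment2 mu g i j l q))
      = (\<Sum>q\<in>UNIV. energy mu pr g l q * h $ q)"
    by (simp add: sum_sum_sum_mult_swap energy_eq_sec_moment2[OF assms] mult.commute)
  finally show ?thesis
    by (simp add: sum_negf)
qed

theorem theorem2p9:
  fixes mu :: "'s::finite \<Rightarrow> 's \<Rightarrow> int ^ 'd \<Rightarrow> real"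
    and pr :: "'s \<Rightarrow> real"
    and g :: "'s \<Rightarrow> real ^ 'd"
    and k :: "real ^ 'd \<Rightarrow> complex"
    and U :: "(real ^ 'd) set"
  assumes "MA_kernel mu" and "MA_irreducible mu" and "MA_aperiodic mu"
    and "exp_moments mu"
    and "stationary mu pr"
    and "appropriate mu pr g"
    and "open U" and "0 \<in> U"
    and "\<forall>th\<in>U. leading_eigenvalue (muhat mu th) (k th)"
  shows "\<exists>G :: real ^ 'd \<Rightarrow> complex ^ 'd.
           (\<forall>\<^sub>F th in nhds 0.
              (k has_derivative (\<lambda>h. \<Sum>l\<in>UNIV. G th $ l * complex_of_real (h $ l))) (at th))
         \<and> G 0 = (\<chi> l. \<i> * complex_of_real (global_drift mu pr $ l))
         \<and> (G has_derivative
              (\<lambda>h. \<chi> l. \<Sum>q\<in>UNIV. - complex_of_real (energy mu pr g l q) * complex_of_real (h $ q)))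
              (at 0)"
proof -
  interpret simple_eigen_perturbation "muhat_sec mu g" "muhat_sec_deriv mu g" "prob_vec pr" 1
    using assms(1,2,4,5) by (rule simple_eigen_perturbation_muhat_sec)
  obtain N W lam vv lam' vv' where
    "eigen_branch (muhat_sec mu g) (muhat_sec_deriv mu g) (prob_vec pr) 1 N W lam vv lam' vv'"
    by (rule eigen_branch_exists)
  then interpret eigen_branch "muhat_sec mu g" "muhat_sec_deriv mu g" "prob_vec pr" 1 N W lam vv lam' vv' .
  have "\<forall>\<^sub>F th in nhds 0. lam th = k th"
    using eventually_leading_eigenvalue_eq_lam[of U k] assms(1,7-9)
    by (simp add: is_eigenvalue_muhat_sec_le_1 leading_eigenvalue_muhat_sec eq_commute)
  moreover have "\<forall>\<^sub>F th in nhds 0. (lam has_derivative (\<lambda>h. \<Sum>l\<in>UNIV. gradient th $ l * of_real (h $ l))) (at th)"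
    using eventually_nhds_in_open[OF open_N zero_in_N] by eventually_elim (rule lam_has_derivative_gradient)
  ultimately have "\<forall>\<^sub>F th in nhds 0. (k has_derivative (\<lambda>h. \<Sum>l\<in>UNIV. gradient th $ l * of_real (h $ l))) (at th)"
    by (rule eventually_has_derivative_cong)
  moreover have "gradient 0 = (\<chi> l. \<i> * complex_of_real (global_drift mu pr $ l))"
    using assms(4-6)
    by (simp add: gradient_0 muhat_sec_deriv_0_mult_ones vdot_simps vdot_prob_vec_ones inner_axis)
  moreover have "(gradient has_derivative
      (\<lambda>h. \<chi> l. \<Sum>q\<in>UNIV. - complex_of_real (energy mu pr g l q) * complex_of_real (h $ q))) (at 0)"
  proof -
    have "vv' 0 h = 0" for h
      by (rule vv'_0_eq_0[OF muhat_sec_deriv_0_mult_ones[OF assms(4,6)]])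
    from gradient_has_derivative[OF this muhat_sec_deriv_axis_has_derivative[OF assms(4)]]
    show ?thesis
      using vdot_muhat_sec_second_deriv_ones[OF assms(4)] by simp
  qed
  ultimately show ?thesis by blast
qed

end
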